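(* Let $\Lambda$ be a linear functional on $\widehat{\mathcal D}^+_0=\mathcal D^+_0\oplus\mathbb C C$, and let $L(\widehat{\mathcal D}^+;\Lambda)$ be the irreducible highest weight $\widehat{\mathcal D}^+$-module with highest weight $\Lambda$. Define $\Delta^+_n=-\Lambda((D+1/2)^n)$ for odd $n\ge1$ and $\Delta^+_\Lambda(x)=\sum_{n\ \mathrm{odd}\ \ge1}\frac{x^n}{n!}\Delta^+_n$. Then $L(\widehat{\mathcal D}^+;\Lambda)$ is quasifinite if and only if $\Delta^+_\Lambda(x)=\dfrac{F(x)}{2\sinh(x/2)}$ for some even quasipolynomial $F(x)$ with $F(0)=0$.
   Context: $\mathcal D$ is the Lie algebra of differential operators $t^kf(D)$ on the circle ($D=t\frac d{dt}$, $f$ polynomial, $f(D)t^s=t^sf(D+s)$). $\widehat{\mathcal D}=\mathcal D\oplus\mathbb CC$ with $[t^rf(D),t^sg(D)]=t^{r+s}(f(D+s)g(D)-f(D)g(D+r))+\Psi(t^rf(D),t^sg(D))C$, where $\Psi=0$ if $r+s\ne0$, $\Psi(t^rf(D),t^{-r}g(D))=\sum_{-r\le j\le-1}f(j)g(j+r)$ for $r\ge0$ (and $\Psi$ is antisymmetric). $\mathcal D^+=\{a\in\mathcal D:\sigma(a)=-a\}$ where $\sigma$ is the anti-involution with $t\mapsto t$, $D\mapsto -D-1$; $\widehat{\mathcal D}^+=\mathcal D^+\oplus\mathbb CC\subset\widehat{\mathcal D}$. Grading: $\deg t^kf(D)=k$, $\deg C=0$; $\widehat{\mathcal D}^+_{\pm}$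 = sum of positive/negative degree parts; $\mathcal D^+_0=\{g(D+1/2):g\text{ odd polynomial}\}$. A highest weight module is generated by a vector annihilated by $\widehat{\mathcal D}^+_+$ on which $\widehat{\mathcal D}^+_0$ acts by $\Lambda$; $L(\widehat{\mathcal D}^+;\Lambda)$ is the irreducible quotient of the Verma module. A graded module $V=\oplus_jV_j$ is quasifinite if every $V_j$ is finite dimensional. A quasipolynomial is a finite linear combination of functions $p(x)e^{\alpha x}$, $p$ polynomial, $\alpha\in\mathbb C$. *)

theory Defs
  imports "HOL-Analysis.Analysis" "HOL-Computational_Algebra.Polynomial"
    "HOL-Computational_Algebra.Formal_Power_Series"
begin

(* An element of the Lie algebra D of differential operators on the circle,
   sum_k t^k f_k(D), is represented by the coefficient function k |-> f_k
   (finite support required where relevant).  An element of Dhat = D + CC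
   is a pair (a, c) standing for a + c*C. *)
type_synonym dop = "int \<Rightarrow> complex poly"
type_synonym dhat = "dop \<times> complex"

definition supp :: "dop \<Rightarrow> int set" where
  "supp a = {k. a k \<noteq> 0}"

definition shiftp :: "complex poly \<Rightarrow> int \<Rightarrow> complex poly" where
  "shiftp f s = pcompose f [:of_int s, 1:]"

(* [t^r f(D), t^s g(D)] = t^(r+s) (f(D+s) g(D) - f(D) g(D+r)), extended bilinearly *)
definition brD :: "dop \<Rightarrow> dop \<Rightarrow> dop" where
  "brD a b = (\<lambda>k. \<Sum>r\<in>supp a. shiftp (a r) (k - r) * b (k - r) - a r * shiftp (b (k - r)) r)"

(* Psi(t^r f(D), t^(-r) g(D)); for r < 0 obtained by antisymmetry *)
definition psi_mono :: "int \<Rightarrow> complex poly \<Rightarrow> complex poly \<Rightarrow> complex" where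
  "psi_mono r f g =
     (if r \<ge> 0 then (\<Sum>j\<in>{-r..-1}. poly f (of_int j) * poly g (of_int (j + r)))
      else - (\<Sum>j\<in>{r..-1}. poly g (of_int j) * poly f (of_int (j - r))))"

definition psi :: "dop \<Rightarrow> dop \<Rightarrow> complex" where
  "psi a b = (\<Sum>r\<in>supp a. psi_mono r (a r) (b (- r)))"

definition brHat :: "dhat \<Rightarrow> dhat \<Rightarrow> dhat" where
  "brHat x y = (brD (fst x) (fst y), psi (fst x) (fst y))"

definition addHat :: "dhat \<Rightarrow> dhat \<Rightarrow> dhat" where
  "addHat x y = ((\<lambda>k. fst x k + fst y k), snd x + snd y)"

definition scaleHat :: "complex \<Rightarrow> dhat \<Rightarrow> dhat" where
  "scaleHat c x = ((\<lambda>k. smult c (fst x k)), c * snd x)"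

(* sigma(t^k f(D)) = f(-D-1) t^k = t^k f(-D-k-1); D^+ = {a. sigma a = -a} *)
definition Dplus :: "dop set" where
  "Dplus = {a. finite (supp a) \<and> (\<forall>k. pcompose (a k) [:- of_int k - 1, -1:] = - a k)}"

definition DhatPlus :: "dhat set" where
  "DhatPlus = {x. fst x \<in> Dplus}"

definition DhatPlus_pos :: "dhat set" where
  "DhatPlus_pos = {(a, 0) | a. a \<in> Dplus \<and> (\<forall>k\<le>0. a k = 0)}"

definition DhatPlus_zero :: "dhat set" where
  "DhatPlus_zero = {(a, c) | a c. a \<in> Dplus \<and> (\<forall>k. k \<noteq> 0 \<longrightarrow> a k = 0)}"

definition mono0 :: "complex poly \<Rightarrow> dhat" where
  "mono0 g = ((\<lambda>k. if k = 0 then g else 0), 0)"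

definition halfD :: "complex poly" where
  "halfD = [:1/2, 1:]"

definition linear_on_zero :: "(dhat \<Rightarrow> complex) \<Rightarrow> bool" where
  "linear_on_zero \<Lambda> \<longleftrightarrow>
     (\<forall>x\<in>DhatPlus_zero. \<forall>y\<in>DhatPlus_zero. \<Lambda> (addHat x y) = \<Lambda> x + \<Lambda> y) \<and>
     (\<forall>c. \<forall>x\<in>DhatPlus_zero. \<Lambda> (scaleHat c x) = c * \<Lambda> x)"

definition is_rep :: "(complex \<Rightarrow> 'v::ab_group_add \<Rightarrow> 'v) \<Rightarrow> (dhat \<Rightarrow> 'v \<Rightarrow> 'v) \<Rightarrow> bool" where
  "is_rep sc \<pi> \<longleftrightarrow> vector_space sc \<and>
     (\<forall>x\<in>DhatPlus. \<forall>u w. \<pi> x (u + w) = \<pi> x u + \<pi> x w) \<and>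
     (\<forall>x\<in>DhatPlus. \<forall>c u. \<pi> x (sc c u) = sc c (\<pi> x u)) \<and>
     (\<forall>x\<in>DhatPlus. \<forall>y\<in>DhatPlus. \<forall>u. \<pi> (addHat x y) u = \<pi> x u + \<pi> y u) \<and>
     (\<forall>x\<in>DhatPlus. \<forall>c u. \<pi> (scaleHat c x) u = sc c (\<pi> x u)) \<and>
     (\<forall>x\<in>DhatPlus. \<forall>y\<in>DhatPlus. \<forall>u. \<pi> (brHat x y) u = \<pi> x (\<pi> y u) - \<pi> y (\<pi> x u))"

definition invariant_subspace :: "(complex \<Rightarrow> 'v::ab_group_add \<Rightarrow> 'v) \<Rightarrow> (dhat \<Rightarrow> 'v \<Rightarrow> 'v) \<Rightarrow> 'v set \<Rightarrow> bool" where
  "invariant_subspace sc \<pi> W \<longleftrightarrow> module.subspace sc W \<and> (\<forall>x\<in>DhatPlus. \<pi> x ` W \<subseteq> W)"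

definition hw_vector :: "(complex \<Rightarrow> 'v::ab_group_add \<Rightarrow> 'v) \<Rightarrow> (dhat \<Rightarrow> 'v \<Rightarrow> 'v) \<Rightarrow> (dhat \<Rightarrow> complex) \<Rightarrow> 'v \<Rightarrow> bool" where
  "hw_vector sc \<pi> \<Lambda> v \<longleftrightarrow> v \<noteq> 0 \<and>
     (\<forall>x\<in>DhatPlus_pos. \<pi> x v = 0) \<and>
     (\<forall>h\<in>DhatPlus_zero. \<pi> h v = sc (\<Lambda> h) v) \<and>
     (\<forall>W. invariant_subspace sc \<pi> W \<and> v \<in> W \<longrightarrow> W = UNIV)"

definition irreducible_rep :: "(complex \<Rightarrow> 'v::ab_group_add \<Rightarrow> 'v) \<Rightarrow> (dhat \<Rightarrow> 'v \<Rightarrow> 'v) \<Rightarrow> bool" where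
  "irreducible_rep sc \<pi> \<longleftrightarrow> (\<exists>u::'v. u \<noteq> 0) \<and>
     (\<forall>W. invariant_subspace sc \<pi> W \<longrightarrow> W = {0} \<or> W = UNIV)"

(* graded piece V_j: ad(D+1/2) is the degree derivation, so V_j is the
   eigenspace of pi(D+1/2) for the eigenvalue Lambda(D+1/2) + j *)
definition grade_space :: "(complex \<Rightarrow> 'v::ab_group_add \<Rightarrow> 'v) \<Rightarrow> (dhat \<Rightarrow> 'v \<Rightarrow> 'v) \<Rightarrow> (dhat \<Rightarrow> complex) \<Rightarrow> int \<Rightarrow> 'v set" where
  "grade_space sc \<pi> \<Lambda> j =
     {w. \<pi> (mono0 halfD) w = sc (\<Lambda> (mono0 halfD) + of_int j) w}"

definition quasifinite :: "(complex \<Rightarrow> 'v::ab_group_add \<Rightarrow> 'v) \<Rightarrow> (dhat \<Rightarrow> 'v \<Rightarrow> 'v) \<Rightarrow> (dhat \<Rightarrow> complex) \<Rightarrow> bool" where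
  "quasifinite sc \<pi> \<Lambda> \<longleftrightarrow>
     (\<forall>j::int. \<exists>B. finite B \<and> B \<subseteq> grade_space sc \<pi> \<Lambda> j \<and>
        grade_space sc \<pi> \<Lambda> j \<subseteq> module.span sc B)"

definition DeltaN :: "(dhat \<Rightarrow> complex) \<Rightarrow> nat \<Rightarrow> complex" where
  "DeltaN \<Lambda> n = - \<Lambda> (mono0 (halfD ^ n))"

definition DeltaFps :: "(dhat \<Rightarrow> complex) \<Rightarrow> complex fps" where
  "DeltaFps \<Lambda> = Abs_fps (\<lambda>n. if odd n then DeltaN \<Lambda> n / fact n else 0)"

definition is_quasipoly :: "(complex \<Rightarrow> complex) \<Rightarrow> bool" where
  "is_quasipoly F \<longleftrightarrow>
     (\<exists>ps :: (complex poly \<times> complex) list.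
        \<forall>x. F x = (\<Sum>(p, \<alpha>)\<leftarrow>ps. poly p x * exp (\<alpha> * x)))"

definition taylor_fps :: "(complex \<Rightarrow> complex) \<Rightarrow> complex fps" where
  "taylor_fps F = Abs_fps (\<lambda>n. (deriv ^^ n) F 0 / fact n)"

end

theory Submission
  imports Defs "HOL-Computational_Algebra.Polynomial_FPS"
    "HOL-Computational_Algebra.Fundamental_Theorem_Algebra"
begin

text \<open>An element \<open>t\<^sup>-\<^sup>1 g(D)\<close> lies in \<open>\<^bold>D\<^sup>+\<close> iff \<open>g\<close> is odd. If \<open>V\<^sub>-\<^sub>1\<close> is finite-dimensional, the
  vectors \<open>t\<^sup>-\<^sup>1 D\<^sup>2\<^sup>m\<^sup>+\<^sup>1 v\<close> are dependent, so \<open>t\<^sup>-\<^sup>1 g(D) v = 0\<close> for some odd \<open>g \<noteq> 0\<close>. Bracketing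
  with \<open>t (D + 1)\<^sup>n\<close> shows that \<open>\<Lambda>\<close> kills \<open>\<phi>(D) - \<phi>(D + 1)\<close> for every multiple \<open>\<phi>\<close> of \<open>g\<close>;
  in terms of the generating series this says that \<open>g(\<partial>)\<close> annihilates
  \<open>(e\<^sup>x\<^sup>/\<^sup>2 - e\<^sup>-\<^sup>x\<^sup>/\<^sup>2) \<Delta>(x)\<close>. Solutions of linear differential equations with constant
  coefficients are exactly the quasipolynomials, which gives \<open>F\<close>.

  Conversely, a quasipolynomial is annihilated by an odd \<open>g(\<partial>)\<close>, so \<open>\<Lambda>\<close> satisfies the same
  shift condition. It forces \<open>t\<^sup>-\<^sup>d f(D) v = 0\<close> whenever \<open>g(D) g(D - 1) \<cdots> g(D - d + 1)\<close>
  divides \<open>f\<close>: these vectors are singular, and \<open>L(\<^bold>D\<^sup>+; \<Lambda>)\<close> is irreducible. Hence every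
  coefficient of degree \<open>-d\<close> may be taken from a finite set of residues, and each \<open>V\<^sub>j\<close> is
  spanned by finitely many words in them.\<close>

unbundle no vec_syntax
unbundle fps_syntax

section \<open>Polynomial differential operators on formal power series\<close>

definition fps_diffop :: "complex poly \<Rightarrow> complex fps \<Rightarrow> complex fps" where
  "fps_diffop g f = (\<Sum>i\<le>degree g. fps_const (coeff g i) * fps_nth_deriv i f)"

lemma fps_diffop_bound:
  assumes "degree g \<le> N"
  shows "fps_diffop g f = (\<Sum>i\<le>N. fps_const (coeff g i) * fps_nth_deriv i f)"
  unfolding fps_diffop_def using assms
  by (intro sum.mono_neutral_left) (auto simp: coeff_eq_0)

lemma fps_diffop_poly_add: "fps_diffop (p + q) f = fps_diffop p f + fps_diffop q f"
proof -
  define N where "N = max (degree p) (degree q)"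
  have "degree (p + q) \<le> N" "degree p \<le> N" "degree q \<le> N"
    by (auto simp: N_def degree_add_le)
  then show ?thesis
    by (simp add: fps_diffop_bound[of _ N] sum.distrib distrib_right
        flip: fps_const_add)
qed

lemma fps_diffop_poly_smult: "fps_diffop (smult c p) f = fps_const c * fps_diffop p f"
  by (simp add: fps_diffop_bound[of "smult c p" "degree p"] fps_diffop_def sum_distrib_left
      mult.assoc flip: fps_const_mult)

lemma fps_diffop_const [simp]: "fps_diffop [:c:] f = fps_const c * f"
  by (simp add: fps_diffop_def)

lemma fps_diffop_1 [simp]: "fps_diffop 1 f = f"
  using fps_diffop_const[of 1 f] by (simp add: one_pCons)

lemma fps_diffop_add: "fps_diffop g (f1 + f2) = fps_diffop g f1 + fps_diffop g f2"
  by (simp add: fps_diffop_def distrib_left sum.distrib)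

lemma fps_diffop_uminus: "fps_diffop g (- f) = - fps_diffop g f"
  by (simp add: fps_diffop_def sum_negf)

lemma fps_diffop_diff: "fps_diffop g (f1 - f2) = fps_diffop g f1 - fps_diffop g f2"
  by (simp add: fps_diffop_def right_diff_distrib sum_subtractf)

lemma fps_diffop_0 [simp]: "fps_diffop g 0 = 0"
  by (simp add: fps_diffop_def)

lemma fps_diffop_poly_0 [simp]: "fps_diffop 0 f = 0"
  by (simp add: fps_diffop_def)

lemma fps_diffop_pCons: "fps_diffop (pCons a p) f = fps_const a * f + fps_deriv (fps_diffop p f)"
proof -
  have "fps_diffop (pCons a p) f
      = (\<Sum>i\<le>Suc (degree p). fps_const (coeff (pCons a p) i) * fps_nth_deriv i f)"
    by (rule fps_diffop_bound) (rule degree_pCons_le)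
  also have "\<dots> = fps_const a * f
      + (\<Sum>i\<le>degree p. fps_const (coeff p i) * fps_nth_deriv (Suc i) f)"
    by (subst sum.atMost_Suc_shift) simp
  also have "(\<Sum>i\<le>degree p. fps_const (coeff p i) * fps_nth_deriv (Suc i) f)
      = fps_deriv (fps_diffop p f)"
    by (simp add: fps_diffop_def fps_deriv_sum fps_nth_deriv_commute del: fps_nth_deriv.simps)
  finally show ?thesis .
qed

lemma fps_diffop_mult: "fps_diffop (p * q) f = fps_diffop p (fps_diffop q f)"
proof (induction p rule: pCons_induct)
  case (pCons a p)
  have "pCons a p * q = smult a q + pCons 0 (p * q)"
    by simp
  then show ?case
    by (simp add: fps_diffop_poly_add fps_diffop_poly_smult fps_diffop_pCons pCons.IH)
qed simp

lemma fps_diffop_linear: "fps_diffop [:-a, 1:] f = fps_deriv f - fps_const a * f"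
  by (simp add: fps_diffop_pCons fps_const_neg[symmetric] del: fps_const_neg)

lemma fps_nth_deriv_nth: "fact n * fps_nth_deriv i (f::complex fps) $ n = fact (n + i) * f $ (n + i)"
proof (induction i arbitrary: n)
  case (Suc i)
  have "fact n * fps_nth_deriv (Suc i) f $ n = fact (n + 1) * fps_nth_deriv i f $ (n + 1)"
    by (simp add: fps_nth_deriv_commute algebra_simps del: fps_nth_deriv.simps)
  also have "\<dots> = fact (n + Suc i) * f $ (n + Suc i)"
    using Suc[of "n + 1"] by simp
  finally show ?case .
qed simp

lemma fps_diffop_nth:
  "fact n * fps_diffop g f $ n = (\<Sum>i\<le>degree g. coeff g i * (fact (n + i) * f $ (n + i)))"
  by (simp add: fps_diffop_def fps_sum_nth sum_distrib_left mult.left_commute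
      flip: fps_nth_deriv_nth)

definition odd_poly :: "complex poly \<Rightarrow> bool" where
  "odd_poly g \<longleftrightarrow> pcompose g [:0, -1:] = - g"

definition even_poly :: "complex poly \<Rightarrow> bool" where
  "even_poly g \<longleftrightarrow> pcompose g [:0, -1:] = g"

lemma odd_poly_coeff_even:
  assumes "odd_poly g" and "even i"
  shows "coeff g i = 0"
proof -
  have "coeff (pcompose g [:0, -1:]) i = coeff (- g) i"
    using assms(1) by (simp add: odd_poly_def)
  then show ?thesis
    using assms(2) by (simp add: coeff_pcompose_linear)
qed

lemma poly_0_eq_0_if_odd: "odd_poly g \<Longrightarrow> poly g 0 = 0"
  by (simp add: odd_poly_coeff_even poly_0_coeff_0)

lemma even_poly_prod_list: "(\<forall>x\<in>set xs. even_poly x) \<Longrightarrow> even_poly (prod_list xs)"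
  by (induction xs) (simp_all add: even_poly_def pcompose_mult pcompose_1)

lemma pcompose_power: "pcompose (p ^ n) q = pcompose p q ^ n"
  by (induction n) (simp_all add: pcompose_mult pcompose_1)

lemma even_poly_power: "even_poly a \<Longrightarrow> even_poly (a ^ k)"
  by (simp add: even_poly_def pcompose_power)

lemma even_poly_linear_pair: "even_poly ([:-a, 1:] * [:a, 1:])"
  by (simp add: even_poly_def pcompose_pCons)

lemma odd_poly_mult_even: "odd_poly a \<Longrightarrow> even_poly b \<Longrightarrow> odd_poly (a * b)"
  by (simp add: odd_poly_def even_poly_def pcompose_mult)

lemma fps_compose_neg_X_nth [simp]: "(f oo - fps_X) $ n = (-1) ^ n * (f :: complex fps) $ n"
  by (simp add: fps_compose_uminus')

lemma fps_compose_neg_X_mult: "(f * g) oo - fps_X = (f oo - fps_X) * (g oo - fps_X :: complex fps)"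
  by (simp add: fps_compose_mult_distrib)

lemma fps_deriv_compose_neg_X: "fps_deriv f oo - fps_X = - fps_deriv (f oo - fps_X :: complex fps)"
  by (simp add: fps_eq_iff)

lemma fps_nth_deriv_compose_neg_X:
  "fps_nth_deriv i f oo - fps_X = fps_const ((-1) ^ i) * fps_nth_deriv i (f oo - fps_X :: complex fps)"
proof (induction i)
  case (Suc i)
  then show ?case
    by (simp add: fps_nth_deriv_commute fps_deriv_compose_neg_X fps_const_neg[symmetric]
        del: fps_nth_deriv.simps fps_const_neg)
qed simp

lemma fps_diffop_odd_compose_neg_X:
  assumes "odd_poly g"
  shows "fps_diffop g f oo - fps_X = - fps_diffop g (f oo - fps_X)"
proof -
  have "fps_const (coeff g i) * (fps_nth_deriv i f oo - fps_X)
      = - (fps_const (coeff g i) * fps_nth_deriv i (f oo - fps_X))" for i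
    using odd_poly_coeff_even[OF assms, of i]
    by (cases "even i")
      (simp_all add: fps_nth_deriv_compose_neg_X flip: fps_const_neg)
  then show ?thesis
    by (simp add: fps_diffop_def fps_compose_sum_distrib sum_negf
        flip: fps_const_mult_apply_left)
qed

lemma fps_compose_neg_X_eq_iff: "A oo - fps_X = A \<longleftrightarrow> (\<forall>n. odd n \<longrightarrow> (A :: complex fps) $ n = 0)"
proof -
  have "(-1) ^ n * A $ n = A $ n \<longleftrightarrow> (odd n \<longrightarrow> A $ n = 0)" for n
    by (cases "even n") auto
  then show ?thesis
    by (simp add: fps_eq_iff)
qed

text \<open>For odd \<open>g\<close> and odd \<open>D\<close>, the odd part of \<open>g(\<partial>)(e\<^sup>-\<^sup>x\<^sup>/\<^sup>2 D)\<close> is half of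
  \<open>g(\<partial>)((e\<^sup>x\<^sup>/\<^sup>2 - e\<^sup>-\<^sup>x\<^sup>/\<^sup>2) D)\<close>.\<close>
lemma odd_coeffs_diffop_iff:
  assumes g: "odd_poly g" and D: "D oo - fps_X = - D"
  shows "(\<forall>n. odd n \<longrightarrow> fps_diffop g (fps_exp (-1/2) * D) $ n = 0)
     \<longleftrightarrow> fps_diffop g ((fps_exp (1/2) - fps_exp (-1/2)) * D) = 0"
proof -
  define A where "A = fps_diffop g (fps_exp (-1/2) * D)"
  define B where "B = fps_diffop g (fps_exp (1/2) * D)"
  have "A oo - fps_X = - fps_diffop g ((fps_exp (-1/2) * D) oo - fps_X)"
    unfolding A_def by (rule fps_diffop_odd_compose_neg_X[OF g])
  also have "(fps_exp (-1/2) * D) oo - fps_X = - (fps_exp (1/2) * D)"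
    by (simp add: fps_compose_neg_X_mult D)
  finally have "A oo - fps_X = B"
    by (simp add: B_def fps_diffop_uminus)
  then have "(\<forall>n. odd n \<longrightarrow> A $ n = 0) \<longleftrightarrow> B - A = 0"
    by (simp add: fps_compose_neg_X_eq_iff[symmetric])
  also have "B - A = fps_diffop g ((fps_exp (1/2) - fps_exp (-1/2)) * D)"
    by (simp add: A_def B_def left_diff_distrib fps_diffop_diff)
  finally show ?thesis unfolding A_def .
qed

section \<open>Quasipolynomials\<close>

definition quasi_fps :: "(complex poly \<times> complex) list \<Rightarrow> complex fps" where
  "quasi_fps ps = (\<Sum>(p, a)\<leftarrow>ps. fps_of_poly p * fps_exp a)"

definition is_quasi_fps :: "complex fps \<Rightarrow> bool" where
  "is_quasi_fps f \<longleftrightarrow> (\<exists>ps. f = quasi_fps ps)"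

lemma quasi_fps_Nil [simp]: "quasi_fps [] = 0"
  by (simp add: quasi_fps_def)

lemma quasi_fps_Cons [simp]: "quasi_fps ((p, a) # ps) = fps_of_poly p * fps_exp a + quasi_fps ps"
  by (simp add: quasi_fps_def)

lemma quasi_fps_append: "quasi_fps (xs @ ys) = quasi_fps xs + quasi_fps ys"
  by (simp add: quasi_fps_def)

lemma quasi_fps_const_mult:
  "fps_const c * quasi_fps ps = quasi_fps (map (\<lambda>(p, a). (smult c p, a)) ps)"
  by (induction ps) (auto simp: fps_of_poly_smult distrib_left mult.assoc)

lemma quasi_fps_exp_mult: "fps_exp b * quasi_fps ps = quasi_fps (map (\<lambda>(p, a). (p, a + b)) ps)"
  by (induction ps) (auto simp: distrib_left fps_exp_add_mult mult_ac)

lemma is_quasi_fps_0: "is_quasi_fps 0"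
  unfolding is_quasi_fps_def by (rule exI[of _ "[]"]) simp

lemma is_quasi_fps_add: "is_quasi_fps f \<Longrightarrow> is_quasi_fps g \<Longrightarrow> is_quasi_fps (f + g)"
  unfolding is_quasi_fps_def by (metis quasi_fps_append)

lemma is_quasi_fps_poly_exp: "is_quasi_fps (fps_of_poly p * fps_exp a)"
  unfolding is_quasi_fps_def by (rule exI[of _ "[(p, a)]"]) simp

lemma is_quasi_fps_const: "is_quasi_fps (fps_const c)"
  using is_quasi_fps_poly_exp[of "[:c:]" 0] by (simp add: fps_of_poly_const)

lemma is_quasi_fps_const_mult: "is_quasi_fps f \<Longrightarrow> is_quasi_fps (fps_const c * f)"
  unfolding is_quasi_fps_def by (metis quasi_fps_const_mult)

lemma is_quasi_fps_exp_mult: "is_quasi_fps f \<Longrightarrow> is_quasi_fps (fps_exp b * f)"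
  unfolding is_quasi_fps_def by (metis quasi_fps_exp_mult)

lemma poly_antiderivative: "\<exists>q. pderiv q = (p :: complex poly)"
proof -
  define q where "q = (\<Sum>i\<le>degree p. monom (coeff p i / of_nat (Suc i)) (Suc i))"
  have "pderiv q = (\<Sum>i\<le>degree p. monom (coeff p i) i)"
    using higher_pderiv_sum[of 1 "\<lambda>i. monom (coeff p i / of_nat (Suc i)) (Suc i)" "{..degree p}"]
    by (simp add: q_def pderiv_monom del: of_nat_Suc)
  also have "\<dots> = p"
    by (rule poly_as_sum_of_monoms)
  finally show ?thesis by blast
qed

lemma poly_first_order_ode_solvable:
  assumes "a \<noteq> 0"
  shows "\<exists>q. pderiv q + smult a q = (p :: complex poly)"
proof (induction "degree p" arbitrary: p rule: less_induct)
  case less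
  show ?case
  proof (cases "degree p = 0")
    case True
    then show ?thesis
      using assms by (intro exI[of _ "smult (1/a) p"]) (simp add: pderiv_smult pderiv_eq_0_iff)
  next
    case False
    define r where "r = smult (1/a) (pderiv p)"
    have "degree r < degree p"
      using False by (simp add: r_def degree_pderiv)
    then obtain q where q: "pderiv q + smult a q = r"
      using less by blast
    have "pderiv (smult (1/a) p - q) + smult a (smult (1/a) p - q)
        = r + p - (pderiv q + smult a q)"
      using assms by (simp add: pderiv_smult pderiv_diff r_def smult_diff_right algebra_simps)
    also have "\<dots> = p"
      by (simp add: q)
    finally show ?thesis by blast
  qed
qed

lemma fps_deriv_poly_exp:
  "fps_deriv (fps_of_poly (q :: complex poly) * fps_exp a)
     = fps_of_poly (pderiv q + smult a q) * fps_exp a"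
  by (simp add: fps_of_poly_add fps_of_poly_smult fps_of_poly_pderiv algebra_simps)

lemma is_quasi_fps_antiderivative:
  assumes "is_quasi_fps f"
  shows "\<exists>h. is_quasi_fps h \<and> fps_deriv h = f"
proof -
  have "\<exists>q. fps_deriv (fps_of_poly q * fps_exp a) = fps_of_poly p * fps_exp a"
    for p :: "complex poly" and a :: complex
  proof (cases "a = 0")
    case True
    obtain q where "pderiv q = p"
      using poly_antiderivative by blast
    then show ?thesis
      using True by (intro exI[of _ q]) (simp add: fps_of_poly_pderiv[symmetric])
  next
    case False
    obtain q where "pderiv q + smult a q = p"
      using poly_first_order_ode_solvable[OF False] by blast
    then show ?thesis
      using fps_deriv_poly_exp[of q a] by (intro exI[of _ q]) simp
  qed
  then have "\<exists>h. is_quasi_fps h \<and> fps_deriv h = quasi_fps ps" for ps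
  proof (induction ps)
    case Nil
    then show ?case using is_quasi_fps_0 by auto
  next
    case (Cons x ps)
    obtain p a where x: "x = (p, a)" by (cases x)
    obtain h where h: "is_quasi_fps h" "fps_deriv h = quasi_fps ps"
      using Cons by blast
    obtain q where "fps_deriv (fps_of_poly q * fps_exp a) = fps_of_poly p * fps_exp a"
      using Cons.prems by blast
    then have "fps_deriv (fps_of_poly q * fps_exp a + h) = quasi_fps (x # ps)"
      by (simp add: x h(2))
    then show ?case
      using is_quasi_fps_add[OF is_quasi_fps_poly_exp h(1)] by blast
  qed
  then show ?thesis
    using assms unfolding is_quasi_fps_def by blast
qed

text \<open>Variation of constants: \<open>(e\<^sup>-\<^sup>a\<^sup>x E)' = e\<^sup>-\<^sup>a\<^sup>x Q\<close>.\<close>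
lemma first_order_ode_solution_quasi:
  assumes E: "fps_deriv E - fps_const a * E = Q" and Q: "is_quasi_fps Q"
  shows "is_quasi_fps E"
proof -
  obtain H where H: "is_quasi_fps H" "fps_deriv H = fps_exp (-a) * Q"
    using is_quasi_fps_antiderivative[OF is_quasi_fps_exp_mult[OF Q]] by blast
  have "fps_deriv (fps_exp (-a) * E) = fps_exp (-a) * (fps_deriv E - fps_const a * E)"
    by (simp add: algebra_simps flip: fps_const_neg)
  also have "\<dots> = fps_deriv H"
    using E H by simp
  finally obtain c where c: "fps_exp (-a) * E = fps_const c + H"
    using fps_deriv_eq_iff_ex by blast
  have "E = fps_exp a * (fps_exp (-a) * E)"
    by (simp add: mult.assoc[symmetric] flip: fps_exp_add_mult)
  then show ?thesis
    by (simp add: c is_quasi_fps_exp_mult is_quasi_fps_add is_quasi_fps_const H)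
qed

lemma fps_diffop_solution_quasi:
  assumes "g \<noteq> 0" and "fps_diffop g f = Q" and "is_quasi_fps Q"
  shows "is_quasi_fps f"
  using assms
proof (induction "degree g" arbitrary: g f Q rule: less_induct)
  case less
  show ?case
  proof (cases "degree g = 0")
    case True
    then obtain c where g: "g = [:c:]"
      by (metis degree_eq_zeroE)
    with less have "c \<noteq> 0" and "Q = fps_const c * f"
      by auto
    then have "f = fps_const (1/c) * Q"
      by (simp add: mult.assoc[symmetric] flip: fps_const_mult)
    then show ?thesis
      using is_quasi_fps_const_mult less(4) by simp
  next
    case False
    then have "\<not> constant (poly g)"
      by (simp add: constant_degree)
    then obtain z where "poly g z = 0"
      using fundamental_theorem_of_algebra by blast
    then obtain h where gh: "g = [:-z, 1:] * h"
      by (metis poly_eq_0_iff_dvd dvdE)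
    with less(2) have "h \<noteq> 0"
      by auto
    then have "degree g = degree [:-z, 1:] + degree h"
      unfolding gh by (intro degree_mult_eq) simp_all
    then have "degree h < degree g"
      by simp
    have "fps_diffop [:-z, 1:] (fps_diffop h f) = Q"
      using less(3) unfolding gh fps_diffop_mult .
    then have "fps_deriv (fps_diffop h f) - fps_const z * fps_diffop h f = Q"
      by (simp add: fps_diffop_linear)
    then have "is_quasi_fps (fps_diffop h f)"
      using first_order_ode_solution_quasi less(4) by blast
    then show ?thesis
      using less(1)[OF \<open>degree h < degree g\<close> \<open>h \<noteq> 0\<close> refl] by blast
  qed
qed

lemma fps_diffop_linear_power_poly_exp:
  "fps_diffop ([:-a, 1:] ^ k) (fps_of_poly p * fps_exp a) = fps_of_poly ((pderiv ^^ k) p) * fps_exp a"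
proof (induction k)
  case (Suc k)
  have "fps_diffop ([:-a, 1:] ^ Suc k) (fps_of_poly p * fps_exp a)
      = fps_diffop [:-a, 1:] (fps_of_poly ((pderiv ^^ k) p) * fps_exp a)"
    by (simp only: power_Suc fps_diffop_mult Suc.IH)
  also have "\<dots> = fps_of_poly ((pderiv ^^ Suc k) p) * fps_exp a"
    by (simp add: fps_diffop_linear fps_of_poly_pderiv algebra_simps)
  finally show ?case .
qed simp

lemma higher_pderiv_degree_less: "degree (p :: complex poly) < k \<Longrightarrow> (pderiv ^^ k) p = 0"
  by (rule poly_eqI) (simp add: coeff_higher_pderiv coeff_eq_0)

lemma fps_diffop_quasi_fps_eq_0:
  assumes "\<forall>(p, a)\<in>set ps. [:-a, 1:] ^ Suc (degree p) dvd g"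
  shows "fps_diffop g (quasi_fps ps) = 0"
  using assms
proof (induction ps)
  case (Cons x ps)
  obtain p a where x: "x = (p, a)" by (cases x)
  from Cons.prems obtain M where M: "g = [:-a, 1:] ^ Suc (degree p) * M"
    by (auto simp: x elim!: dvdE)
  have "(pderiv ^^ Suc (degree p)) p = 0"
    by (rule higher_pderiv_degree_less) simp
  then have "fps_diffop g (fps_of_poly p * fps_exp a) = 0"
    by (simp only: M mult.commute[of "[:-a, 1:] ^ Suc (degree p)"] fps_diffop_mult
        fps_diffop_linear_power_poly_exp) simp
  then show ?case
    using Cons by (simp add: x fps_diffop_add)
qed simp

definition quasi_annihilator :: "(complex poly \<times> complex) list \<Rightarrow> complex poly" where
  "quasi_annihilator ps =
     [:0, 1:] * prod_list (map (\<lambda>(p, a). ([:-a, 1:] * [:a, 1:]) ^ Suc (degree p)) ps)"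

lemma quasi_annihilator:
  shows "quasi_annihilator ps \<noteq> 0" and "odd_poly (quasi_annihilator ps)"
    and "fps_diffop (quasi_annihilator ps) (quasi_fps ps) = 0"
proof -
  define P where "P = prod_list (map (\<lambda>(p, a). ([:-a, 1:] * [:a, 1:]) ^ Suc (degree p)) ps)"
  have "P \<noteq> 0"
    unfolding P_def prod_list_zero_iff by (auto simp del: mult_pCons_left mult_pCons_right)
  then show "quasi_annihilator ps \<noteq> 0"
    by (simp add: quasi_annihilator_def P_def)
  have "even_poly P"
    unfolding P_def
    by (rule even_poly_prod_list)
      (auto intro!: even_poly_power even_poly_linear_pair
        simp del: mult_pCons_left mult_pCons_right power_Suc)
  then show "odd_poly (quasi_annihilator ps)"
    unfolding quasi_annihilator_def P_def[symmetric]
    by (rule odd_poly_mult_even[rotated]) (simp add: odd_poly_def pcompose_pCons)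
  show "fps_diffop (quasi_annihilator ps) (quasi_fps ps) = 0"
  proof (rule fps_diffop_quasi_fps_eq_0, clarify)
    fix p a assume "(p, a) \<in> set ps"
    then have "([:-a, 1:] * [:a, 1:]) ^ Suc (degree p) dvd P"
      unfolding P_def by (intro prod_list_dvd) force
    then show "[:-a, 1:] ^ Suc (degree p) dvd quasi_annihilator ps"
      unfolding quasi_annihilator_def P_def[symmetric]
      by (metis dvd_mult dvd_mult_left power_mult_distrib)
  qed
qed

definition quasi_fun :: "(complex poly \<times> complex) list \<Rightarrow> complex \<Rightarrow> complex" where
  "quasi_fun ps = (\<lambda>x. \<Sum>(p, a)\<leftarrow>ps. poly p x * exp (a * x))"

lemma quasi_fun_Cons [simp]:
  "quasi_fun ((p, a) # ps) = (\<lambda>x. poly p x * exp (a * x) + quasi_fun ps x)"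
  by (simp add: quasi_fun_def)

lemma quasi_fun_append: "quasi_fun (xs @ ys) x = quasi_fun xs x + quasi_fun ys x"
  by (simp add: quasi_fun_def)

lemma is_quasipoly_iff_quasi_fun: "is_quasipoly F \<longleftrightarrow> (\<exists>ps. F = quasi_fun ps)"
  unfolding is_quasipoly_def quasi_fun_def by auto

lemma poly_has_fps_expansion: "poly p has_fps_expansion fps_of_poly (p :: complex poly)"
proof (induction p)
  case (pCons a p)
  have "(\<lambda>x. a + poly p x * x) has_fps_expansion fps_const a + fps_of_poly p * fps_X"
    by (intro has_fps_expansion_add has_fps_expansion_mult pCons.IH has_fps_expansion_fps_X) simp
  then show ?case
    by (simp add: fps_of_poly_pCons mult.commute)
qed simp

lemma taylor_fps_quasi_fun: "taylor_fps (quasi_fun ps) = quasi_fps ps"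
proof -
  have "quasi_fun ps has_fps_expansion quasi_fps ps"
  proof (induction ps)
    case Nil
    then show ?case by (simp add: quasi_fun_def)
  next
    case (Cons x ps)
    then show ?case
      by (cases x) (simp, intro has_fps_expansion_add has_fps_expansion_mult
          poly_has_fps_expansion has_fps_expansion_exp)
  qed
  then show ?thesis
    by (intro fps_ext) (simp add: taylor_fps_def fps_nth_fps_expansion)
qed

text \<open>Averaging \<open>F(x)\<close> and \<open>F(-x)\<close> makes a quasipolynomial with even Taylor series even.\<close>
lemma even_quasi_fun_exists:
  assumes "quasi_fps ps oo - fps_X = quasi_fps ps"
  shows "\<exists>qs. quasi_fps qs = quasi_fps ps \<and> (\<forall>x. quasi_fun qs (- x) = quasi_fun qs x)"
proof -
  define half where "half = map (\<lambda>(p :: complex poly, a :: complex). (smult (1/2) p, a))"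
  define reflect where "reflect = map (\<lambda>(p :: complex poly, a :: complex). (pcompose p [:0, -1:], - a))"
  have "fps_of_poly p oo - fps_X = fps_of_poly (pcompose p [:0, -1:])" for p :: "complex poly"
    by (rule fps_ext) (simp add: coeff_pcompose_linear)
  then have "quasi_fps (reflect ps) = quasi_fps ps oo - fps_X"
    by (induction ps) (auto simp: reflect_def fps_compose_add_distrib fps_compose_neg_X_mult)
  moreover have "quasi_fps (half qs) = fps_const (1/2) * quasi_fps qs" for qs
    by (simp add: half_def quasi_fps_const_mult)
  ultimately have "quasi_fps (half ps @ half (reflect ps)) = fps_const (1/2 + 1/2) * quasi_fps ps"
    using assms by (simp add: quasi_fps_append distrib_right flip: fps_const_add)
  then have "quasi_fps (half ps @ half (reflect ps)) = quasi_fps ps"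
    by simp
  moreover have "quasi_fun (half ps @ half (reflect ps)) (- x) = quasi_fun (half ps @ half (reflect ps)) x" for x
  proof -
    have h: "quasi_fun (half qs) y = quasi_fun qs y / 2" for qs y
      by (induction qs) (auto simp: half_def quasi_fun_def)
    have r: "quasi_fun (reflect qs) y = quasi_fun qs (- y)" for qs y
      by (induction qs) (auto simp: reflect_def poly_pcompose quasi_fun_def)
    show ?thesis
      by (simp add: quasi_fun_append h r)
  qed
  ultimately show ?thesis
    by blast
qed

lemma quasi_fun_if_diffop_condition:
  assumes D: "D oo - fps_X = - D" and g: "g \<noteq> 0" "odd_poly g"
    and c: "\<forall>n. odd n \<longrightarrow> fps_diffop g (fps_exp (-1/2) * D) $ n = 0"
  shows "\<exists>F. is_quasipoly F \<and> (\<forall>x. F (- x) = F x) \<and> F 0 = 0 \<and>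
           taylor_fps F = (fps_exp (1/2) - fps_exp (-1/2)) * D"
proof -
  define \<Phi> where "\<Phi> = (fps_exp (1/2) - fps_exp (-1/2)) * D"
  have "fps_diffop g \<Phi> = 0"
    using odd_coeffs_diffop_iff[OF g(2) D] c by (simp add: \<Phi>_def)
  then have "is_quasi_fps \<Phi>"
    using fps_diffop_solution_quasi[OF g(1) _ is_quasi_fps_0] by blast
  then obtain ps where ps: "\<Phi> = quasi_fps ps"
    by (auto simp: is_quasi_fps_def)
  have "(fps_exp (1/2) - fps_exp (-1/2)) oo - fps_X = - (fps_exp (1/2) - fps_exp (-1/2 :: complex))"
    by (simp add: fps_compose_sub_distrib)
  then have "\<Phi> oo - fps_X = - (fps_exp (1/2) - fps_exp (-1/2)) * - D"
    by (simp only: \<Phi>_def fps_compose_neg_X_mult D)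
  then have "\<Phi> oo - fps_X = \<Phi>"
    by (simp only: minus_mult_minus \<Phi>_def)
  then have "quasi_fps ps oo - fps_X = quasi_fps ps"
    by (simp add: ps)
  then obtain qs where qs: "quasi_fps qs = \<Phi>" "\<forall>x. quasi_fun qs (- x) = quasi_fun qs x"
    using even_quasi_fun_exists ps by blast
  have T: "taylor_fps (quasi_fun qs) = \<Phi>"
    by (simp add: taylor_fps_quasi_fun qs(1))
  have "quasi_fun qs 0 = taylor_fps (quasi_fun qs) $ 0"
    by (simp add: taylor_fps_def)
  also have "\<dots> = 0"
    by (simp add: T \<Phi>_def)
  finally have "quasi_fun qs 0 = 0" .
  moreover have "is_quasipoly (quasi_fun qs)"
    by (auto simp: is_quasipoly_iff_quasi_fun)
  ultimately show ?thesis
    using qs(2) T unfolding \<Phi>_def by (intro exI[of _ "quasi_fun qs"]) simp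
qed

lemma diffop_condition_if_quasi_fun:
  assumes D: "D oo - fps_X = - D" and F: "is_quasipoly F"
    and T: "taylor_fps F = (fps_exp (1/2) - fps_exp (-1/2)) * D"
  shows "\<exists>g. g \<noteq> 0 \<and> odd_poly g \<and> (\<forall>n. odd n \<longrightarrow> fps_diffop g (fps_exp (-1/2) * D) $ n = 0)"
proof -
  obtain ps where "F = quasi_fun ps"
    using F unfolding is_quasipoly_iff_quasi_fun by blast
  then have "quasi_fps ps = (fps_exp (1/2) - fps_exp (-1/2)) * D"
    using T by (simp only: taylor_fps_quasi_fun)
  then have "fps_diffop (quasi_annihilator ps) ((fps_exp (1/2) - fps_exp (-1/2)) * D) = 0"
    using quasi_annihilator(3)[of ps] by (simp only:)
  then have "\<forall>n. odd n \<longrightarrow> fps_diffop (quasi_annihilator ps) (fps_exp (-1/2) * D) $ n = 0"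
    by (rule iffD2[OF odd_coeffs_diffop_iff[OF quasi_annihilator(2) D]])
  with quasi_annihilator(1,2) show ?thesis
    by (intro exI[of _ "quasi_annihilator ps"]) simp
qed

section \<open>Homogeneous elements of \<open>\<^bold>D\<^sup>+\<close>\<close>

text \<open>\<open>tmono d f\<close> is \<open>t\<^sup>d f(D)\<close> and \<open>central c\<close> is \<open>c C\<close>.\<close>

definition tmonof :: "int \<Rightarrow> complex poly \<Rightarrow> dop" where
  "tmonof d f = (\<lambda>k. if k = d then f else 0)"

definition tmono :: "int \<Rightarrow> complex poly \<Rightarrow> dhat" where
  "tmono d f = (tmonof d f, 0)"

definition central :: "complex \<Rightarrow> dhat" where
  "central c = ((\<lambda>k. 0), c)"

definition Dplus_coeff :: "int \<Rightarrow> complex poly \<Rightarrow> bool" where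
  "Dplus_coeff d f \<longleftrightarrow> pcompose f [:- of_int d - 1, -1:] = - f"

definition bracket_coeff :: "int \<Rightarrow> complex poly \<Rightarrow> int \<Rightarrow> complex poly \<Rightarrow> complex poly" where
  "bracket_coeff r f s g = shiftp f s * g - f * shiftp g r"

lemma pcompose_linear_linear: "pcompose [:a, b:] [:c, e:] = [:a + b * c, b * e:]"
  by (simp add: pcompose_pCons)

lemma shiftp_by_0 [simp]: "shiftp f 0 = f"
  by (simp add: shiftp_def)

lemma shiftp_0 [simp]: "shiftp 0 s = 0"
  by (simp add: shiftp_def)

lemma shiftp_1 [simp]: "shiftp 1 s = 1"
  by (simp add: shiftp_def pcompose_1)

lemma shiftp_add: "shiftp (f + g) s = shiftp f s + shiftp g s"
  by (simp add: shiftp_def pcompose_add)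

lemma shiftp_mult: "shiftp (f * g) s = shiftp f s * shiftp g s"
  by (simp add: shiftp_def pcompose_mult)

lemma shiftp_smult: "shiftp (smult c f) s = smult c (shiftp f s)"
  by (simp add: shiftp_def pcompose_smult)

lemma shiftp_shiftp: "shiftp (shiftp f a) b = shiftp f (a + b)"
  by (simp add: shiftp_def pcompose_assoc[symmetric] pcompose_linear_linear add.commute)

lemma shiftp_prod: "shiftp (prod F A) s = (\<Prod>i\<in>A. shiftp (F i) s)"
  by (induction A rule: infinite_finite_induct) (simp_all add: shiftp_mult)

lemma shiftp_sum: "shiftp (sum F A) s = (\<Sum>i\<in>A. shiftp (F i) s)"
  by (induction A rule: infinite_finite_induct) (simp_all add: shiftp_add)

lemma shiftp_eq_0_iff: "shiftp g s = 0 \<longleftrightarrow> g = 0"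
  by (simp add: shiftp_def pcompose_eq_0_iff)

lemma tmonof_Dplus: "Dplus_coeff d f \<Longrightarrow> tmonof d f \<in> Dplus"
  by (auto simp: Dplus_def Dplus_coeff_def tmonof_def supp_def intro: finite_subset[of _ "{d}"])

lemma zero_Dplus: "(\<lambda>k. 0) \<in> Dplus"
  by (simp add: Dplus_def supp_def)

lemma tmono_DhatPlus: "Dplus_coeff d f \<Longrightarrow> tmono d f \<in> DhatPlus"
  by (simp add: tmono_def DhatPlus_def tmonof_Dplus)

lemma central_DhatPlus: "central c \<in> DhatPlus"
  by (simp add: central_def DhatPlus_def zero_Dplus)

lemma tmono_DhatPlus_zero: "Dplus_coeff 0 f \<Longrightarrow> tmono 0 f \<in> DhatPlus_zero"
  using tmonof_Dplus[of 0 f] by (auto simp: DhatPlus_zero_def tmono_def tmonof_def)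

lemma central_DhatPlus_zero: "central c \<in> DhatPlus_zero"
  using zero_Dplus by (auto simp: DhatPlus_zero_def central_def)

lemma tmono_DhatPlus_pos: "0 < d \<Longrightarrow> Dplus_coeff d f \<Longrightarrow> tmono d f \<in> DhatPlus_pos"
  using tmonof_Dplus[of d f] by (auto simp: DhatPlus_pos_def tmono_def tmonof_def)

lemma mono0_eq_tmono: "mono0 f = tmono 0 f"
  by (simp add: mono0_def tmono_def tmonof_def)

lemma addHat_tmono: "addHat (tmono d f) (tmono d g) = tmono d (f + g)"
  by (auto simp: addHat_def tmono_def tmonof_def)

lemma scaleHat_tmono: "scaleHat c (tmono d f) = tmono d (smult c f)"
  by (auto simp: scaleHat_def tmono_def tmonof_def)

lemma tmono_0_eq_central: "tmono d 0 = central 0"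
  by (auto simp: tmono_def tmonof_def central_def)

lemma Dplus_coeff_0 [simp]: "Dplus_coeff d 0"
  by (simp add: Dplus_coeff_def)

lemma Dplus_coeff_add: "Dplus_coeff d f \<Longrightarrow> Dplus_coeff d g \<Longrightarrow> Dplus_coeff d (f + g)"
  by (simp add: Dplus_coeff_def pcompose_add)

lemma Dplus_coeff_smult: "Dplus_coeff d f \<Longrightarrow> Dplus_coeff d (smult c f)"
  by (simp add: Dplus_coeff_def pcompose_smult)

lemma Dplus_coeff_diff: "Dplus_coeff d f \<Longrightarrow> Dplus_coeff d g \<Longrightarrow> Dplus_coeff d (f - g)"
  by (simp add: Dplus_coeff_def pcompose_diff)

lemma Dplus_coeff_sum: "(\<And>i. i \<in> A \<Longrightarrow> Dplus_coeff d (F i)) \<Longrightarrow> Dplus_coeff d (sum F A)"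
  by (induction A rule: infinite_finite_induct) (simp_all add: Dplus_coeff_add)

lemma Dplus_coeff_neg1_iff: "Dplus_coeff (-1) g \<longleftrightarrow> odd_poly g"
  by (simp add: Dplus_coeff_def odd_poly_def)

lemma Dplus_coeff_halfD: "Dplus_coeff 0 halfD"
  by (simp add: Dplus_coeff_def halfD_def pcompose_pCons)

lemma Dplus_coeff_halfD_power: "odd n \<Longrightarrow> Dplus_coeff 0 (halfD ^ n)"
  using Dplus_coeff_halfD by (simp add: Dplus_coeff_def pcompose_power)

lemma brD_tmonof: "brD (tmonof r f) (tmonof s g) = tmonof (r + s) (bracket_coeff r f s g)"
proof (cases "f = 0")
  case True
  then have "supp (tmonof r f) = {}"
    by (simp add: supp_def tmonof_def)
  then show ?thesis
    using True by (auto simp: brD_def tmonof_def bracket_coeff_def fun_eq_iff shiftp_def)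
next
  case False
  then have "supp (tmonof r f) = {r}"
    by (auto simp: supp_def tmonof_def)
  then show ?thesis
    by (auto simp: brD_def tmonof_def bracket_coeff_def fun_eq_iff)
qed

lemma psi_tmonof: "psi (tmonof r f) (tmonof s g) = (if r + s = 0 then psi_mono r f g else 0)"
proof (cases "f = 0")
  case True
  then have "supp (tmonof r f) = {}"
    by (simp add: supp_def tmonof_def)
  then show ?thesis
    using True by (simp add: psi_def psi_mono_def)
next
  case False
  then have "supp (tmonof r f) = {r}"
    by (auto simp: supp_def tmonof_def)
  then show ?thesis
    by (auto simp: psi_def tmonof_def psi_mono_def)
qed

lemma brHat_tmono: "brHat (tmono r f) (tmono s g) =
   addHat (tmono (r + s) (bracket_coeff r f s g)) (central (if r + s = 0 then psi_mono r f g else 0))"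
  by (simp add: brHat_def addHat_def central_def tmono_def brD_tmonof psi_tmonof)

lemma brHat_central_left: "brHat (central c) y = central 0"
  by (simp add: brHat_def central_def brD_def psi_def supp_def)

lemma Dplus_coeff_bracket:
  assumes f: "Dplus_coeff r f" and g: "Dplus_coeff s g"
  shows "Dplus_coeff (r + s) (bracket_coeff r f s g)"
proof -
  define t where "t = [:- of_int (r + s) - 1, -1 :: complex:]"
  have c: "pcompose [:of_int s, 1:] t = [:- of_int r - 1, -1:]"
    "pcompose [:- of_int s - 1, -1:] [:of_int r, 1:] = t"
    "pcompose [:- of_int r - 1, -1:] [:of_int s, 1:] = t"
    "pcompose [:of_int r, 1:] t = [:- of_int s - 1, -1:]"
    by (simp_all add: t_def pcompose_linear_linear)
  have "pcompose (shiftp f s) t = - f" "pcompose (shiftp g r) t = - g"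
    using f g by (simp_all add: shiftp_def Dplus_coeff_def c flip: pcompose_assoc)
  moreover have "pcompose g t = - shiftp g r"
    using g unfolding c(2)[symmetric] by (simp add: shiftp_def Dplus_coeff_def pcompose_uminus
        pcompose_assoc)
  moreover have "pcompose f t = - shiftp f s"
    using f unfolding c(3)[symmetric] by (simp add: shiftp_def Dplus_coeff_def pcompose_uminus
        pcompose_assoc)
  ultimately show ?thesis
    unfolding Dplus_coeff_def t_def[symmetric] bracket_coeff_def
    by (simp add: pcompose_diff pcompose_mult)
qed

lemma bracket_coeff_halfD: "bracket_coeff 0 halfD d f = smult (of_int d) f"
proof -
  have "shiftp halfD d - halfD = [:of_int d:]"
    by (simp add: shiftp_def halfD_def pcompose_pCons)
  then show ?thesis
    by (simp add: bracket_coeff_def flip: left_diff_distrib)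
qed

text \<open>A word \<open>[(d\<^sub>1, f\<^sub>1), \<dots>, (d\<^sub>k, f\<^sub>k)]\<close> stands for the product
  \<open>t\<^sup>d\<^sup>\<^sub>1 f\<^sub>1(D) \<cdots> t\<^sup>d\<^sup>\<^sub>k f\<^sub>k(D)\<close>.\<close>

definition word_deg :: "(int \<times> complex poly) list \<Rightarrow> int" where
  "word_deg ws = sum_list (map fst ws)"

definition Dplus_word :: "(int \<times> complex poly) list \<Rightarrow> bool" where
  "Dplus_word ws \<longleftrightarrow> (\<forall>(d, f)\<in>set ws. Dplus_coeff d f)"

definition neg_word :: "(int \<times> complex poly) list \<Rightarrow> bool" where
  "neg_word ws \<longleftrightarrow> (\<forall>(d, f)\<in>set ws. d < 0 \<and> Dplus_coeff d f)"

lemma word_deg_Nil [simp]: "word_deg [] = 0"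
  by (simp add: word_deg_def)

lemma word_deg_Cons [simp]: "word_deg ((d, f) # ws) = d + word_deg ws"
  by (simp add: word_deg_def)

lemma Dplus_word_Nil [simp]: "Dplus_word []"
  by (simp add: Dplus_word_def)

lemma Dplus_word_Cons [simp]: "Dplus_word ((d, f) # ws) \<longleftrightarrow> Dplus_coeff d f \<and> Dplus_word ws"
  by (simp add: Dplus_word_def)

lemma neg_word_Nil [simp]: "neg_word []"
  by (simp add: neg_word_def)

lemma neg_word_Cons [simp]: "neg_word ((d, f) # ws) \<longleftrightarrow> d < 0 \<and> Dplus_coeff d f \<and> neg_word ws"
  by (simp add: neg_word_def)

lemma neg_word_Dplus_word: "neg_word ws \<Longrightarrow> Dplus_word ws"
  by (auto simp: neg_word_def Dplus_word_def)

lemma neg_word_deg_le: "neg_word ws \<Longrightarrow> word_deg ws \<le> - int (length ws)"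
proof (induction ws)
  case (Cons x ws)
  then show ?case by (cases x) auto
qed simp

section \<open>Irreducible highest weight modules\<close>

locale hw_irrep =
  fixes sc :: "complex \<Rightarrow> 'v::ab_group_add \<Rightarrow> 'v"
    and \<pi> :: "dhat \<Rightarrow> 'v \<Rightarrow> 'v"
    and \<Lambda> :: "dhat \<Rightarrow> complex"
    and v :: 'v
  assumes rep: "is_rep sc \<pi>" and lin: "linear_on_zero \<Lambda>"
    and hw: "hw_vector sc \<pi> \<Lambda> v" and irr: "irreducible_rep sc \<pi>"
begin

sublocale vector_space sc
  using rep by (simp add: is_rep_def)

lemma pi_add: "x \<in> DhatPlus \<Longrightarrow> \<pi> x (u + w) = \<pi> x u + \<pi> x w"
  using rep by (simp add: is_rep_def)

lemma pi_scale: "x \<in> DhatPlus \<Longrightarrow> \<pi> x (sc c u) = sc c (\<pi> x u)"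
  using rep by (simp add: is_rep_def)

lemma pi_addHat: "x \<in> DhatPlus \<Longrightarrow> y \<in> DhatPlus \<Longrightarrow> \<pi> (addHat x y) u = \<pi> x u + \<pi> y u"
  using rep by (simp add: is_rep_def)

lemma pi_scaleHat: "x \<in> DhatPlus \<Longrightarrow> \<pi> (scaleHat c x) u = sc c (\<pi> x u)"
  using rep by (simp add: is_rep_def)

lemma pi_brHat:
  "x \<in> DhatPlus \<Longrightarrow> y \<in> DhatPlus \<Longrightarrow> \<pi> x (\<pi> y u) = \<pi> (brHat x y) u + \<pi> y (\<pi> x u)"
  using rep by (simp add: is_rep_def)

lemma pi_additive: "x \<in> DhatPlus \<Longrightarrow> Modules.additive (\<pi> x)"
  by unfold_locales (rule pi_add)

lemma pi_0: "x \<in> DhatPlus \<Longrightarrow> \<pi> x 0 = 0"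
  using Modules.additive.zero[OF pi_additive] by blast

lemma pi_diff: "x \<in> DhatPlus \<Longrightarrow> \<pi> x (u - w) = \<pi> x u - \<pi> x w"
  using Modules.additive.diff[OF pi_additive] by blast

lemma pi_span:
  assumes x: "x \<in> DhatPlus" and G: "\<And>g. g \<in> G \<Longrightarrow> \<pi> x g \<in> span H" and u: "u \<in> span G"
  shows "\<pi> x u \<in> span H"
proof -
  have "subspace {u. \<pi> x u \<in> span H}"
    unfolding subspace_def using x by (auto simp: pi_0 pi_add pi_scale span_add span_scale span_zero)
  then show ?thesis
    using span_subspace_induct[OF u, of "{u. \<pi> x u \<in> span H}"] G by blast
qed

lemma pi_central_0: "\<pi> (central 0) u = 0"
proof -
  have "central 0 = addHat (central 0) (central 0)"
    by (simp add: central_def addHat_def)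
  then show ?thesis
    using pi_addHat[OF central_DhatPlus central_DhatPlus, of 0 0 u] by simp
qed

lemma pi_tmono_0: "\<pi> (tmono d 0) u = 0"
  by (simp add: tmono_0_eq_central pi_central_0)

lemma pi_tmono_add:
  "Dplus_coeff d f \<Longrightarrow> Dplus_coeff d g \<Longrightarrow> \<pi> (tmono d (f + g)) u = \<pi> (tmono d f) u + \<pi> (tmono d g) u"
  by (simp add: pi_addHat tmono_DhatPlus flip: addHat_tmono)

lemma pi_tmono_smult: "Dplus_coeff d f \<Longrightarrow> \<pi> (tmono d (smult c f)) u = sc c (\<pi> (tmono d f) u)"
  by (simp add: pi_scaleHat tmono_DhatPlus flip: scaleHat_tmono)

lemma pi_tmono_sum:
  "(\<And>i. i \<in> A \<Longrightarrow> Dplus_coeff d (F i)) \<Longrightarrow> \<pi> (tmono d (sum F A)) u = (\<Sum>i\<in>A. \<pi> (tmono d (F i)) u)"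
  by (induction A rule: infinite_finite_induct) (simp_all add: pi_tmono_0 pi_tmono_add Dplus_coeff_sum)

lemma pi_tmono_commute:
  assumes "Dplus_coeff r f" "Dplus_coeff s g"
  shows "\<pi> (tmono r f) (\<pi> (tmono s g) u) = \<pi> (tmono (r + s) (bracket_coeff r f s g)) u
     + \<pi> (central (if r + s = 0 then psi_mono r f g else 0)) u + \<pi> (tmono s g) (\<pi> (tmono r f) u)"
  using pi_brHat[OF tmono_DhatPlus[OF assms(1)] tmono_DhatPlus[OF assms(2)], of u] assms
  by (simp add: brHat_tmono pi_addHat central_DhatPlus tmono_DhatPlus Dplus_coeff_bracket)

lemma pi_tmono_commute_ne:
  assumes "Dplus_coeff r f" "Dplus_coeff s g" "r + s \<noteq> 0"
  shows "\<pi> (tmono r f) (\<pi> (tmono s g) u)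
     = \<pi> (tmono (r + s) (bracket_coeff r f s g)) u + \<pi> (tmono s g) (\<pi> (tmono r f) u)"
  using pi_tmono_commute[OF assms(1,2), of u] assms(3) by (simp add: pi_central_0)

lemma pi_central_commute: "y \<in> DhatPlus \<Longrightarrow> \<pi> (central c) (\<pi> y u) = \<pi> y (\<pi> (central c) u)"
  using pi_brHat[OF central_DhatPlus, of y c u] by (simp add: brHat_central_left pi_central_0)

lemma v_nonzero: "v \<noteq> 0"
  using hw by (simp add: hw_vector_def)

lemma v_pos_annihilated: "0 < d \<Longrightarrow> Dplus_coeff d f \<Longrightarrow> \<pi> (tmono d f) v = 0"
  using hw tmono_DhatPlus_pos by (simp add: hw_vector_def)

lemma v_weight: "Dplus_coeff 0 f \<Longrightarrow> \<pi> (tmono 0 f) v = sc (\<Lambda> (tmono 0 f)) v"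
  using hw tmono_DhatPlus_zero by (simp add: hw_vector_def)

lemma v_central: "\<pi> (central c) v = sc (\<Lambda> (central c)) v"
  using hw central_DhatPlus_zero by (simp add: hw_vector_def)

lemma v_generates: "invariant_subspace sc \<pi> W \<Longrightarrow> v \<in> W \<Longrightarrow> W = UNIV"
  using hw by (simp add: hw_vector_def)

abbreviation V :: "int \<Rightarrow> 'v set" where
  "V j \<equiv> grade_space sc \<pi> \<Lambda> j"

lemma grade_iff: "w \<in> V j \<longleftrightarrow> \<pi> (tmono 0 halfD) w = sc (\<Lambda> (tmono 0 halfD) + of_int j) w"
  by (simp add: grade_space_def mono0_eq_tmono)

lemma halfD_DhatPlus: "tmono 0 halfD \<in> DhatPlus"
  by (simp add: tmono_DhatPlus Dplus_coeff_halfD)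

lemma subspace_grade: "subspace (V j)"
  unfolding subspace_def
proof (intro conjI ballI allI)
  show "0 \<in> V j"
    by (simp add: grade_iff pi_0 halfD_DhatPlus)
next
  fix x y assume "x \<in> V j" "y \<in> V j"
  then show "x + y \<in> V j"
    by (simp add: grade_iff pi_add halfD_DhatPlus scale_right_distrib)
next
  fix c x assume "x \<in> V j"
  then show "sc c x \<in> V j"
    by (simp add: grade_iff pi_scale halfD_DhatPlus mult.commute)
qed

lemma pi_tmono_grade:
  assumes f: "Dplus_coeff d f" and w: "w \<in> V j"
  shows "\<pi> (tmono d f) w \<in> V (j + d)"
proof -
  have "\<pi> (tmono 0 halfD) (\<pi> (tmono d f) w)
      = \<pi> (tmono d (smult (of_int d) f)) w + \<pi> (tmono d f) (\<pi> (tmono 0 halfD) w)"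
    using pi_tmono_commute[OF Dplus_coeff_halfD f, of w]
    by (simp add: bracket_coeff_halfD psi_mono_def pi_central_0)
  also have "\<dots> = sc (of_int d) (\<pi> (tmono d f) w)
      + sc (\<Lambda> (tmono 0 halfD) + of_int j) (\<pi> (tmono d f) w)"
    using w f by (simp add: grade_iff pi_tmono_smult pi_scale tmono_DhatPlus)
  also have "\<dots> = sc (\<Lambda> (tmono 0 halfD) + of_int (j + d)) (\<pi> (tmono d f) w)"
    by (simp add: add_ac flip: scale_left_distrib)
  finally show ?thesis
    by (simp only: grade_iff)
qed

lemma v_grade_0: "v \<in> V 0"
  using v_weight[OF Dplus_coeff_halfD] by (simp add: grade_iff)

definition eig_op :: "int \<Rightarrow> 'v \<Rightarrow> 'v" where
  "eig_op k u = \<pi> (tmono 0 halfD) u - sc (\<Lambda> (tmono 0 halfD) + of_int k) u"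

fun eig_ops :: "int list \<Rightarrow> 'v \<Rightarrow> 'v" where
  "eig_ops [] u = u"
| "eig_ops (k # ks) u = eig_op k (eig_ops ks u)"

lemma eig_op_add: "eig_op k (u + w) = eig_op k u + eig_op k w"
  by (simp add: eig_op_def pi_add halfD_DhatPlus scale_right_distrib)

lemma eig_op_scale: "eig_op k (sc c u) = sc c (eig_op k u)"
  by (simp add: eig_op_def pi_scale halfD_DhatPlus scale_right_diff_distrib mult.commute)

lemma eig_op_commute: "eig_op a (eig_op b u) = eig_op b (eig_op a u)"
  by (simp add: eig_op_def pi_diff pi_scale halfD_DhatPlus scale_right_diff_distrib mult.commute)

lemma eig_ops_add: "eig_ops ks (u + w) = eig_ops ks u + eig_ops ks w"
  by (induction ks) (simp_all add: eig_op_add)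

lemma eig_ops_scale: "eig_ops ks (sc c u) = sc c (eig_ops ks u)"
  by (induction ks) (simp_all add: eig_op_scale)

lemma eig_ops_0: "eig_ops ks 0 = 0"
  using eig_ops_scale[of ks 0 0] by simp

lemma eig_ops_commute: "eig_ops ks (eig_ops ls u) = eig_ops ls (eig_ops ks u)"
proof -
  have "eig_ops ks (eig_op k u) = eig_op k (eig_ops ks u)" for ks k u
    by (induction ks) (simp_all add: eig_op_commute)
  then show ?thesis
    by (induction ls) simp_all
qed

lemma eig_ops_append: "eig_ops (ks @ ls) u = eig_ops ks (eig_ops ls u)"
  by (induction ks) simp_all

lemma eig_ops_grade: "u \<in> V j \<Longrightarrow> eig_ops ks u = sc (\<Prod>k\<leftarrow>ks. of_int j - of_int k) u"
proof (induction ks)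
  case (Cons k ks)
  have "eig_op k u = sc (of_int j - of_int k) u"
    using Cons.prems by (simp add: eig_op_def grade_iff scale_left_diff_distrib[symmetric])
  then show ?case
    using Cons by (simp add: eig_op_scale mult.commute)
qed simp

text \<open>The graded pieces are independent: every vector in the span of the \<open>V k\<close>, \<open>k \<in> K\<close>, is
  killed by a product of the operators \<open>H - \<lambda> - k\<close>, \<open>k \<in> K\<close>, which acts on \<open>V j\<close>
  by a nonzero scalar when \<open>j \<notin> K\<close>.\<close>
lemma grade_independent:
  assumes u: "u \<in> V j" "u \<in> span (\<Union>k\<in>K. V k)" and j: "j \<notin> K"
  shows "u = 0"
proof -
  define Z where "Z = {u. \<exists>ks. set ks \<subseteq> K \<and> eig_ops ks u = 0}"
  have "subspace Z"
    unfolding subspace_def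
  proof (intro conjI ballI allI)
    show "0 \<in> Z"
      unfolding Z_def by (rule CollectI, rule exI[of _ "[]"]) simp
  next
    fix x y assume "x \<in> Z" "y \<in> Z"
    then obtain ks ls where ks: "set ks \<subseteq> K" "eig_ops ks x = 0"
      and ls: "set ls \<subseteq> K" "eig_ops ls y = 0"
      by (auto simp: Z_def)
    have "eig_ops (ks @ ls) (x + y) = eig_ops ls (eig_ops ks x) + eig_ops ks (eig_ops ls y)"
      by (simp only: eig_ops_append eig_ops_add eig_ops_commute[of ks ls x])
    then have "eig_ops (ks @ ls) (x + y) = 0"
      by (simp add: ks(2) ls(2) eig_ops_0)
    then show "x + y \<in> Z"
      using ks(1) ls(1) unfolding Z_def by (intro CollectI exI[of _ "ks @ ls"]) simp
  next
    fix c x assume "x \<in> Z"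
    then show "sc c x \<in> Z"
      by (auto simp: Z_def eig_ops_scale)
  qed
  moreover have "(\<Union>k\<in>K. V k) \<subseteq> Z"
  proof clarify
    fix k x assume "k \<in> K" "x \<in> V k"
    then have "set [k] \<subseteq> K" "eig_ops [k] x = 0"
      by (simp_all add: eig_op_def grade_iff)
    then show "x \<in> Z"
      unfolding Z_def by blast
  qed
  ultimately have "u \<in> Z"
    using u(2) span_minimal by blast
  then obtain ks where ks: "set ks \<subseteq> K" "eig_ops ks u = 0"
    by (auto simp: Z_def)
  have "(\<Prod>k\<leftarrow>ks. of_int j - of_int k) \<noteq> (0::complex)"
    using ks(1) j by (auto simp: prod_list_zero_iff)
  then show ?thesis
    using ks(2) eig_ops_grade[OF u(1), of ks] by simp
qed

fun word_act :: "(int \<times> complex poly) list \<Rightarrow> 'v \<Rightarrow> 'v" where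
  "word_act [] u = u"
| "word_act ((d, f) # ws) u = \<pi> (tmono d f) (word_act ws u)"

lemma word_act_grade: "Dplus_word ws \<Longrightarrow> w \<in> V j \<Longrightarrow> word_act ws w \<in> V (j + word_deg ws)"
proof (induction ws)
  case (Cons x ws)
  obtain d f where x: "x = (d, f)"
    by (cases x)
  with Cons have "word_act ws w \<in> V (j + word_deg ws)" "Dplus_coeff d f"
    by auto
  from pi_tmono_grade[OF this(2,1)] show ?case
    by (simp add: x add_ac)
qed simp

lemma word_act_scale: "Dplus_word ws \<Longrightarrow> word_act ws (sc c u) = sc c (word_act ws u)"
proof (induction ws)
  case (Cons x ws)
  then show ?case by (cases x) (simp add: pi_scale tmono_DhatPlus)
qed simp

lemma pi_central_word_act:
  "Dplus_word ws \<Longrightarrow> \<pi> (central c) (word_act ws u) = word_act ws (\<pi> (central c) u)"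
proof (induction ws)
  case (Cons x ws)
  then show ?case by (cases x) (simp add: pi_central_commute tmono_DhatPlus)
qed simp

text \<open>\<open>neg_span T\<close> is \<open>U(\<^bold>D\<^sup>+\<^sub>-) T\<close>; if \<open>T\<close> is stable under the elements of degree \<open>\<ge> 0\<close>,
  commuting these past the negative letters shows that \<open>neg_span T\<close> is a submodule.\<close>

definition neg_span :: "'v set \<Rightarrow> 'v set" where
  "neg_span T = span {word_act ws t | ws t. neg_word ws \<and> t \<in> T}"

lemma neg_span_base: "t \<in> T \<Longrightarrow> t \<in> neg_span T"
  unfolding neg_span_def by (rule span_base) (auto intro!: exI[of _ "[]"])

lemma word_act_in_neg_span: "neg_word ws \<Longrightarrow> t \<in> T \<Longrightarrow> word_act ws t \<in> neg_span T"
  unfolding neg_span_def by (rule span_base) auto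

lemma pi_neg_tmono_neg_span:
  assumes d: "d < 0" "Dplus_coeff d f" and u: "u \<in> neg_span T"
  shows "\<pi> (tmono d f) u \<in> neg_span T"
  unfolding neg_span_def
proof (rule pi_span[OF tmono_DhatPlus[OF d(2)] _ u[unfolded neg_span_def]])
  fix g assume "g \<in> {word_act ws t | ws t. neg_word ws \<and> t \<in> T}"
  then obtain ws t where "g = word_act ws t" "neg_word ws" "t \<in> T"
    by blast
  then show "\<pi> (tmono d f) g \<in> span {word_act ws t | ws t. neg_word ws \<and> t \<in> T}"
    using d by (intro span_base) (auto intro!: exI[of _ "(d, f) # ws"])
qed

lemma pi_central_neg_span:
  assumes C: "\<And>c u. u \<in> T \<Longrightarrow> \<pi> (central c) u \<in> T" and u: "u \<in> neg_span T"
  shows "\<pi> (central c) u \<in> neg_span T"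
  unfolding neg_span_def
proof (rule pi_span[OF central_DhatPlus _ u[unfolded neg_span_def]])
  fix g assume "g \<in> {word_act ws t | ws t. neg_word ws \<and> t \<in> T}"
  then obtain ws t where "g = word_act ws t" "neg_word ws" "t \<in> T"
    by blast
  then show "\<pi> (central c) g \<in> span {word_act ws t | ws t. neg_word ws \<and> t \<in> T}"
    using C by (simp add: pi_central_word_act neg_word_Dplus_word span_base
        word_act_in_neg_span[unfolded neg_span_def])
qed

lemma pi_nonneg_word_act_neg_span:
  assumes P: "\<And>e f u. 0 \<le> e \<Longrightarrow> Dplus_coeff e f \<Longrightarrow> u \<in> T \<Longrightarrow> \<pi> (tmono e f) u \<in> T"
    and C: "\<And>c u. u \<in> T \<Longrightarrow> \<pi> (central c) u \<in> T"
    and ws: "neg_word ws" and t: "t \<in> T" and e: "0 \<le> e" "Dplus_coeff e f"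
  shows "\<pi> (tmono e f) (word_act ws t) \<in> neg_span T"
  using ws e
proof (induction ws arbitrary: e f)
  case Nil
  then show ?case
    using P t neg_span_base by simp
next
  case (Cons x ws)
  obtain d g where x: "x = (d, g)"
    by (cases x)
  with Cons.prems have d: "d < 0" "Dplus_coeff d g" and ws: "neg_word ws"
    by auto
  define w where "w = word_act ws t"
  have A: "\<pi> (tmono (e + d) (bracket_coeff e f d g)) w \<in> neg_span T"
  proof (cases "0 \<le> e + d")
    case True
    then show ?thesis
      using Cons.IH[OF ws] Dplus_coeff_bracket[OF Cons.prems(3) d(2)] by (simp add: w_def)
  next
    case False
    then have "neg_word ((e + d, bracket_coeff e f d g) # ws)"
      using Dplus_coeff_bracket[OF Cons.prems(3) d(2)] ws by simp
    from word_act_in_neg_span[OF this t] show ?thesis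
      by (simp add: w_def)
  qed
  have B: "\<pi> (central c) w \<in> neg_span T" for c
    using C t ws by (simp add: w_def pi_central_word_act neg_word_Dplus_word word_act_in_neg_span)
  have C: "\<pi> (tmono d g) (\<pi> (tmono e f) w) \<in> neg_span T"
    using pi_neg_tmono_neg_span[OF d] Cons.IH[OF ws Cons.prems(2,3)] by (simp add: w_def)
  show ?case
    unfolding x word_act.simps w_def[symmetric] pi_tmono_commute[OF Cons.prems(3) d(2)]
    using A B C unfolding neg_span_def by (intro span_add)
qed

lemma pi_expand:
  assumes "finite S" "a \<in> Dplus" "supp a \<subseteq> S"
  shows "\<pi> (a, c) u = (\<Sum>k\<in>S. \<pi> (tmono k (a k)) u) + \<pi> (central c) u"
  using assms
proof (induction S arbitrary: a rule: finite_induct)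
  case empty
  then have "a = (\<lambda>k. 0)"
    by (auto simp: supp_def fun_eq_iff)
  then show ?case
    by (simp add: central_def)
next
  case (insert k S)
  define a' where "a' = a(k := 0)"
  have "supp a' \<subseteq> supp a" "supp a' \<subseteq> S"
    using insert.prems(2) by (auto simp: supp_def a'_def)
  then have a': "a' \<in> Dplus" "(a', c) \<in> DhatPlus"
    using insert.prems(1) finite_subset by (auto simp: Dplus_def DhatPlus_def a'_def)
  have k: "Dplus_coeff k (a k)"
    using insert.prems(1) by (simp add: Dplus_def Dplus_coeff_def)
  have "(a, c) = addHat (tmono k (a k)) (a', c)"
    by (auto simp: addHat_def tmono_def tmonof_def a'_def fun_eq_iff)
  then have "\<pi> (a, c) u = \<pi> (tmono k (a k)) u + \<pi> (a', c) u"
    using pi_addHat[OF tmono_DhatPlus[OF k] a'(2)] by simp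
  also have "\<pi> (a', c) u = (\<Sum>j\<in>S. \<pi> (tmono j (a' j)) u) + \<pi> (central c) u"
    using insert.IH[OF a'(1) \<open>supp a' \<subseteq> S\<close>] .
  also have "(\<Sum>j\<in>S. \<pi> (tmono j (a' j)) u) = (\<Sum>j\<in>S. \<pi> (tmono j (a j)) u)"
    using insert.hyps(2) by (intro sum.cong) (auto simp: a'_def)
  finally show ?case
    using insert.hyps by (simp add: add.assoc)
qed

lemma invariant_subspaceI:
  assumes W: "subspace W"
    and T: "\<And>k f u. Dplus_coeff k f \<Longrightarrow> u \<in> W \<Longrightarrow> \<pi> (tmono k f) u \<in> W"
    and C: "\<And>c u. u \<in> W \<Longrightarrow> \<pi> (central c) u \<in> W"
  shows "invariant_subspace sc \<pi> W"
  unfolding invariant_subspace_def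
proof (intro conjI W ballI image_subsetI)
  fix x u assume "x \<in> DhatPlus" "u \<in> W"
  moreover obtain a c where x: "x = (a, c)"
    by (cases x)
  ultimately have a: "a \<in> Dplus"
    by (simp add: DhatPlus_def)
  then have "\<pi> x u = (\<Sum>k\<in>supp a. \<pi> (tmono k (a k)) u) + \<pi> (central c) u"
    unfolding x by (intro pi_expand) (simp_all add: Dplus_def)
  also have "\<dots> \<in> W"
    using a W T C \<open>u \<in> W\<close> by (intro subspace_add subspace_sum) (auto simp: Dplus_def Dplus_coeff_def)
  finally show "\<pi> x u \<in> W" .
qed

lemma invariant_neg_span:
  assumes P: "\<And>e f u. 0 \<le> e \<Longrightarrow> Dplus_coeff e f \<Longrightarrow> u \<in> T \<Longrightarrow> \<pi> (tmono e f) u \<in> T"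
    and C: "\<And>c u. u \<in> T \<Longrightarrow> \<pi> (central c) u \<in> T"
  shows "invariant_subspace sc \<pi> (neg_span T)"
proof (rule invariant_subspaceI)
  fix k f u assume k: "Dplus_coeff k f" and u: "u \<in> neg_span T"
  show "\<pi> (tmono k f) u \<in> neg_span T"
  proof (cases "k < 0")
    case True
    then show ?thesis
      using pi_neg_tmono_neg_span k u by blast
  next
    case False
    show ?thesis
      unfolding neg_span_def
    proof (rule pi_span[OF tmono_DhatPlus[OF k] _ u[unfolded neg_span_def]])
      fix g assume "g \<in> {word_act ws t | ws t. neg_word ws \<and> t \<in> T}"
      then show "\<pi> (tmono k f) g \<in> span {word_act ws t | ws t. neg_word ws \<and> t \<in> T}"
        using pi_nonneg_word_act_neg_span[OF P C _ _ _ k] False by (auto simp: neg_span_def)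
    qed
  qed
qed (use C pi_central_neg_span in \<open>auto simp: neg_span_def\<close>)

text \<open>A subspace of \<open>V\<^sub>-\<^sub>d\<close>, \<open>d > 0\<close>, of singular vectors generates a submodule living in
  negative degrees, hence not containing \<open>v\<close>; by irreducibility it is zero.\<close>
lemma singular_subspace_eq_0:
  assumes T: "subspace T" and TV: "T \<subseteq> V (- d)" and d: "0 < d"
    and P: "\<And>e f t. 0 < e \<Longrightarrow> Dplus_coeff e f \<Longrightarrow> t \<in> T \<Longrightarrow> \<pi> (tmono e f) t = 0"
    and Z: "\<And>f t. Dplus_coeff 0 f \<Longrightarrow> t \<in> T \<Longrightarrow> \<pi> (tmono 0 f) t \<in> T"
    and C: "\<And>c t. t \<in> T \<Longrightarrow> \<pi> (central c) t \<in> T"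
    and t: "t \<in> T"
  shows "t = 0"
proof -
  have P': "\<pi> (tmono e f) u \<in> T" if "0 \<le> e" "Dplus_coeff e f" "u \<in> T" for e f u
  proof (cases "e = 0")
    case True
    then show ?thesis
      using that Z by simp
  next
    case False
    then show ?thesis
      using that P[of e f u] subspace_0[OF T] by simp
  qed
  have inv: "invariant_subspace sc \<pi> (neg_span T)"
    by (rule invariant_neg_span[OF P' C])
  have "neg_span T \<subseteq> span (\<Union>k\<in>{k. k < 0}. V k)"
    unfolding neg_span_def
  proof (rule span_mono, clarify)
    fix ws t' assume ws: "neg_word ws" and t': "t' \<in> T"
    have "word_act ws t' \<in> V (- d + word_deg ws)"
      using word_act_grade[OF neg_word_Dplus_word[OF ws]] t' TV by blast
    moreover have "- d + word_deg ws < 0"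
      using neg_word_deg_le[OF ws] d by simp
    ultimately show "word_act ws t' \<in> (\<Union>k\<in>{k. k < 0}. V k)"
      by blast
  qed
  have "v \<notin> neg_span T"
  proof
    assume "v \<in> neg_span T"
    with \<open>neg_span T \<subseteq> _\<close> have "v = 0"
      by (intro grade_independent[OF v_grade_0]) auto
    with v_nonzero show False ..
  qed
  then have "neg_span T = {0}"
    using irr inv by (auto simp: irreducible_rep_def)
  then show ?thesis
    using neg_span_base[OF t] by simp
qed

definition neg_word_vectors :: "int \<Rightarrow> 'v set" where
  "neg_word_vectors j = {word_act ws v | ws. neg_word ws \<and> word_deg ws = j}"

lemma neg_word_vectors_grade: "neg_word_vectors j \<subseteq> V j"
  using word_act_grade[OF neg_word_Dplus_word v_grade_0] by (auto simp: neg_word_vectors_def)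

lemma span_neg_word_vectors: "u \<in> span (\<Union>j. neg_word_vectors j)"
proof -
  have P: "\<pi> (tmono e f) u \<in> span {v}" if "0 \<le> e" "Dplus_coeff e f" "u \<in> span {v}" for e f u
  proof (rule pi_span[OF tmono_DhatPlus[OF that(2)] _ that(3)])
    show "\<pi> (tmono e f) g \<in> span {v}" if "g \<in> {v}" for g
      using that v_weight[of f] v_pos_annihilated[of e f] \<open>0 \<le> e\<close> \<open>Dplus_coeff e f\<close>
      by (cases "e = 0") (auto simp: span_scale span_base span_zero)
  qed
  have C: "\<pi> (central c) u \<in> span {v}" if "u \<in> span {v}" for c u
  proof (rule pi_span[OF central_DhatPlus _ that])
    show "\<pi> (central c) g \<in> span {v}" if "g \<in> {v}" for g
      using that by (simp add: v_central span_scale span_base)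
  qed
  have "invariant_subspace sc \<pi> (neg_span (span {v}))"
    by (rule invariant_neg_span[OF P C])
  moreover have "v \<in> neg_span (span {v})"
    by (intro neg_span_base span_base) simp
  ultimately have "neg_span (span {v}) = UNIV"
    by (rule v_generates)
  moreover have "neg_span (span {v}) \<subseteq> span (\<Union>j. neg_word_vectors j)"
    unfolding neg_span_def
  proof (rule span_minimal, clarify)
    fix ws t assume ws: "neg_word ws" and "t \<in> span {v}"
    then obtain c where "t = sc c v"
      by (auto simp: span_singleton)
    then have "word_act ws t = sc c (word_act ws v)"
      by (simp add: word_act_scale neg_word_Dplus_word[OF ws])
    moreover have "word_act ws v \<in> (\<Union>j. neg_word_vectors j)"
      using ws by (auto simp: neg_word_vectors_def)
    ultimately show "word_act ws t \<in> span (\<Union>j. neg_word_vectors j)"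
      by (simp add: span_scale span_base)
  qed simp
  ultimately show ?thesis
    by blast
qed

lemma grade_in_span_neg_word_vectors:
  assumes u: "u \<in> V j"
  shows "u \<in> span (neg_word_vectors j)"
proof -
  have "(\<Union>j. neg_word_vectors j) = neg_word_vectors j \<union> (\<Union>k\<in>{k. k \<noteq> j}. neg_word_vectors k)"
    by auto
  then have "u \<in> span (neg_word_vectors j \<union> (\<Union>k\<in>{k. k \<noteq> j}. neg_word_vectors k))"
    using span_neg_word_vectors by simp
  then obtain a b where ab: "u = a + b" "a \<in> span (neg_word_vectors j)"
    "b \<in> span (\<Union>k\<in>{k. k \<noteq> j}. neg_word_vectors k)"
    unfolding span_Un by blast
  have "a \<in> V j"
    by (rule subsetD[OF span_minimal[OF neg_word_vectors_grade subspace_grade] ab(2)])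
  then have "u - a \<in> V j"
    by (rule subspace_diff[OF subspace_grade u])
  then have "b \<in> V j"
    using ab(1) by simp
  moreover have "(\<Union>k\<in>{k. k \<noteq> j}. neg_word_vectors k) \<subseteq> (\<Union>k\<in>{k. k \<noteq> j}. V k)"
    by (intro UN_mono order.refl neg_word_vectors_grade)
  then have "b \<in> span (\<Union>k\<in>{k. k \<noteq> j}. V k)"
    by (rule subsetD[OF span_mono ab(3)])
  ultimately have "b = 0"
    using grade_independent[of b j "{k. k \<noteq> j}"] by simp
  then show ?thesis
    using ab by simp
qed

end

section \<open>The highest weight on degree zero\<close>

text \<open>Writing \<open>P(D) = Q(D + 1/2)\<close>, the functional \<open>lam_ext L\<close> sends \<open>P\<close> to
  \<open>\<Sum> Q\<^sub>n L((D + 1/2)\<^sup>n)\<close>, the sum over odd \<open>n\<close>. It extends \<open>\<Lambda>\<close> from \<open>\<^bold>D\<^sup>+\<^sub>0\<close>, where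
  \<open>Q\<close> is odd, to all polynomials.\<close>

definition lam_coeff :: "(dhat \<Rightarrow> complex) \<Rightarrow> nat \<Rightarrow> complex" where
  "lam_coeff L n = (if odd n then L (tmono 0 (halfD ^ n)) else 0)"

definition lam_ext :: "(dhat \<Rightarrow> complex) \<Rightarrow> complex poly \<Rightarrow> complex" where
  "lam_ext L P = (\<Sum>n\<le>degree P. coeff (pcompose P [:-1/2, 1:]) n * lam_coeff L n)"

lemma pcompose_monom: "pcompose (monom c n) r = smult c (r ^ n)"
  by (simp add: monom_altdef pcompose_smult pcompose_power pcompose_pCons)

lemma degree_pcompose_shift: "degree (pcompose P [:a, 1 :: complex:]) = degree P"
  by (simp add: degree_pcompose)

lemma lam_ext_bound:
  assumes "degree P \<le> N"
  shows "lam_ext L P = (\<Sum>n\<le>N. coeff (pcompose P [:-1/2, 1:]) n * lam_coeff L n)"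
  unfolding lam_ext_def using assms
  by (intro sum.mono_neutral_left) (auto simp: coeff_eq_0 degree_pcompose_shift)

lemma lam_ext_add: "lam_ext L (P + Q) = lam_ext L P + lam_ext L Q"
proof -
  define N where "N = max (degree P) (degree Q)"
  have "degree (P + Q) \<le> N" "degree P \<le> N" "degree Q \<le> N"
    by (auto simp: N_def degree_add_le)
  then show ?thesis
    by (simp add: lam_ext_bound[of _ N] pcompose_add sum.distrib distrib_right)
qed

lemma lam_ext_smult: "lam_ext L (smult c P) = c * lam_ext L P"
  by (simp add: lam_ext_bound[of "smult c P" "degree P"] lam_ext_def pcompose_smult
      sum_distrib_left mult.assoc)

lemma lam_ext_diff: "lam_ext L (P - Q) = lam_ext L P - lam_ext L Q"
  using lam_ext_add[of L "P - Q" Q] by simp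

lemma lam_ext_0 [simp]: "lam_ext L 0 = 0"
  by (simp add: lam_ext_def)

lemma lam_ext_sum: "lam_ext L (sum F A) = (\<Sum>i\<in>A. lam_ext L (F i))"
  by (induction A rule: infinite_finite_induct) (simp_all add: lam_ext_add)

lemma lam_ext_reflect: "lam_ext L (pcompose P [:-1, -1:]) = - lam_ext L P"
proof -
  have "pcompose (pcompose P [:-1, -1:]) [:-1/2, 1:] = pcompose (pcompose P [:-1/2, 1:]) [:0, -1 :: complex:]"
    by (simp add: pcompose_assoc[symmetric] pcompose_linear_linear)
  moreover have "degree (pcompose P [:-1, -1 :: complex:]) = degree P"
    by (simp add: degree_pcompose)
  ultimately have "lam_ext L (pcompose P [:-1, -1:])
      = (\<Sum>n\<le>degree P. (-1) ^ n * coeff (pcompose P [:-1/2, 1:]) n * lam_coeff L n)"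
    by (simp add: lam_ext_def coeff_pcompose_linear)
  also have "\<dots> = (\<Sum>n\<le>degree P. - (coeff (pcompose P [:-1/2, 1:]) n * lam_coeff L n))"
    by (intro sum.cong) (auto simp: lam_coeff_def)
  finally show ?thesis
    by (simp add: lam_ext_def sum_negf)
qed

text \<open>\<open>k(D + 1) = k(-D)\<close> evaluated at \<open>-D - 1\<close>.\<close>
lemma lam_ext_shiftp_1: "lam_ext L (shiftp k 1) = - lam_ext L (pcompose k [:0, -1:])"
proof -
  have "shiftp k 1 = pcompose (pcompose k [:0, -1:]) [:-1, -1:]"
    by (simp add: shiftp_def pcompose_assoc[symmetric] pcompose_linear_linear)
  then show ?thesis
    by (simp add: lam_ext_reflect)
qed

lemma lam_ext_monom: "lam_ext L (monom 1 m) = - fact m * (DeltaFps L * fps_exp (-1/2)) $ m"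
proof -
  have "lam_ext L (monom 1 m) = (\<Sum>n\<le>m. coeff ([:-1/2, 1:] ^ m) n * lam_coeff L n)"
    by (simp add: lam_ext_def pcompose_monom degree_monom_eq)
  also have "\<dots> = (\<Sum>n\<le>m. - fact m * (DeltaFps L $ n * ((-1/2) ^ (m - n) / fact (m - n))))"
  proof (intro sum.cong refl)
    fix n assume "n \<in> {..m}"
    then have n: "n \<le> m"
      by simp
    have "coeff ([:-1/2, 1:] ^ m) n = of_nat (m choose n) * (-1/2 :: complex) ^ (m - n)"
      using coeff_linear_poly_power[OF n, of "-1/2 :: complex" 1] by simp
    also have "of_nat (m choose n) = (fact m / (fact n * fact (m - n)) :: complex)"
      by (rule binomial_fact[OF n])
    finally show "coeff ([:-1/2, 1:] ^ m) n * lam_coeff L n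
        = - fact m * (DeltaFps L $ n * ((-1/2) ^ (m - n) / fact (m - n)))"
      by (simp add: DeltaFps_def DeltaN_def lam_coeff_def mono0_eq_tmono field_simps)
  qed
  also have "\<dots> = - fact m * (DeltaFps L * fps_exp (-1/2)) $ m"
    by (simp add: fps_mult_nth sum_distrib_left atLeast0AtMost)
  finally show ?thesis .
qed

lemma lam_ext_mult_monom:
  "lam_ext L (g * monom 1 n) = - fact n * fps_diffop g (fps_exp (-1/2) * DeltaFps L) $ n"
proof -
  have "g * monom 1 n = (\<Sum>i\<le>degree g. smult (coeff g i) (monom 1 (n + i)))"
    by (subst poly_as_sum_of_monoms[of g, symmetric])
      (simp add: sum_distrib_right mult_monom smult_monom add.commute)
  then have "lam_ext L (g * monom 1 n)
      = - (\<Sum>i\<le>degree g. coeff g i * (fact (n + i) * (DeltaFps L * fps_exp (-1/2)) $ (n + i)))"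
    by (simp add: lam_ext_sum lam_ext_smult lam_ext_monom sum_negf)
  then show ?thesis
    by (simp add: fps_diffop_nth mult.commute)
qed

lemma lam_ext_shift_condition:
  assumes g: "odd_poly g"
    and c: "\<And>n. odd n \<Longrightarrow> lam_ext L (g * monom 1 n) = 0"
  shows "lam_ext L (g * q - shiftp (g * q) 1) = 0"
proof -
  have monomial: "lam_ext L (g * monom 1 n - shiftp (g * monom 1 n) 1) = 0" for n
  proof -
    have "pcompose (monom 1 n) [:0, -1:] = smult ((-1) ^ n) (monom (1 :: complex) n)"
      by (rule poly_eqI) (simp add: coeff_pcompose_linear coeff_monom)
    then have "pcompose (g * monom 1 n) [:0, -1:] = smult (- ((-1) ^ n)) (g * monom 1 n)"
      using g by (simp add: odd_poly_def pcompose_mult)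
    then have "lam_ext L (g * monom 1 n - shiftp (g * monom 1 n) 1)
        = lam_ext L (g * monom 1 n) - - (- ((-1) ^ n) * lam_ext L (g * monom 1 n))"
      by (simp only: lam_ext_diff lam_ext_shiftp_1 lam_ext_smult)
    then show ?thesis
      using c[of n] by (cases "even n") simp_all
  qed
  have "g * q = g * (\<Sum>n\<le>degree q. smult (coeff q n) (monom 1 n))"
    by (simp add: smult_monom poly_as_sum_of_monoms)
  then have "g * q = (\<Sum>n\<le>degree q. smult (coeff q n) (g * monom 1 n))"
    by (simp add: sum_distrib_left mult_smult_right)
  then have "g * q - shiftp (g * q) 1
      = (\<Sum>n\<le>degree q. smult (coeff q n) (g * monom 1 n - shiftp (g * monom 1 n) 1))"
    by (simp add: shiftp_sum shiftp_smult smult_diff_right sum_subtractf)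
  then show ?thesis
    by (simp add: lam_ext_sum lam_ext_smult monomial)
qed

lemma lam_ext_shift_telescope:
  assumes c: "\<And>q. lam_ext L (g * q - shiftp (g * q) 1) = 0"
    and dvd: "\<And>s. s < d \<Longrightarrow> g dvd shiftp \<phi> (int s)"
  shows "lam_ext L (\<phi> - shiftp \<phi> (int d)) = 0"
  using dvd
proof (induction d)
  case (Suc d)
  obtain q where q: "shiftp \<phi> (int d) = g * q"
    using Suc.prems[of d] by (auto elim!: dvdE)
  have "shiftp (shiftp \<phi> (int d)) 1 = shiftp \<phi> (int (Suc d))"
    by (simp add: shiftp_shiftp add.commute)
  then have "\<phi> - shiftp \<phi> (int (Suc d)) = (\<phi> - shiftp \<phi> (int d)) + (g * q - shiftp (g * q) 1)"
    by (simp add: q)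
  moreover have "lam_ext L (\<phi> - shiftp \<phi> (int d)) = 0"
    using Suc by simp
  ultimately show ?case
    using c[of q] by (simp only: lam_ext_add) simp
qed simp

lemma Lam_tmono_add:
  "linear_on_zero L \<Longrightarrow> Dplus_coeff 0 a \<Longrightarrow> Dplus_coeff 0 b
    \<Longrightarrow> L (tmono 0 (a + b)) = L (tmono 0 a) + L (tmono 0 b)"
  using tmono_DhatPlus_zero by (simp add: linear_on_zero_def flip: addHat_tmono)

lemma Lam_tmono_smult:
  "linear_on_zero L \<Longrightarrow> Dplus_coeff 0 a \<Longrightarrow> L (tmono 0 (smult c a)) = c * L (tmono 0 a)"
  using tmono_DhatPlus_zero by (simp add: linear_on_zero_def flip: scaleHat_tmono)

lemma Lam_tmono_0: "linear_on_zero L \<Longrightarrow> L (tmono 0 0) = 0"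
  using Lam_tmono_smult[of L 0 0] by simp

lemma Lam_tmono_sum:
  assumes "linear_on_zero L" "\<And>n. n \<in> S \<Longrightarrow> Dplus_coeff 0 (F n)"
  shows "L (tmono 0 (sum F S)) = (\<Sum>n\<in>S. L (tmono 0 (F n)))"
  using assms(2)
  by (induction S rule: infinite_finite_induct)
    (simp_all add: assms(1) Lam_tmono_0 Lam_tmono_add Dplus_coeff_sum)

lemma pcompose_as_sum: "pcompose Q r = (\<Sum>n\<le>degree Q. smult (coeff Q n) (r ^ n))"
  by (subst poly_as_sum_of_monoms[of Q, symmetric]) (simp add: pcompose_sum pcompose_monom)

lemma Lam_tmono_eq_lam_ext:
  assumes L: "linear_on_zero L" and P: "Dplus_coeff 0 P"
  shows "L (tmono 0 P) = lam_ext L P"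
proof -
  define Q where "Q = pcompose P [:-1/2, 1:]"
  have PQ: "P = pcompose Q halfD"
    by (simp add: Q_def halfD_def pcompose_assoc[symmetric] pcompose_linear_linear)
  have "pcompose Q [:0, -1:] = pcompose (pcompose P [:-1, -1:]) [:-1/2, 1:]"
    by (simp add: Q_def pcompose_assoc[symmetric] pcompose_linear_linear)
  then have "odd_poly Q"
    using P by (simp add: odd_poly_def Dplus_coeff_def Q_def pcompose_uminus)
  then have pt: "Dplus_coeff 0 (smult (coeff Q n) (halfD ^ n))" for n
    by (cases "even n") (simp_all add: odd_poly_coeff_even Dplus_coeff_smult Dplus_coeff_halfD_power)
  have "L (tmono 0 P) = (\<Sum>n\<le>degree Q. L (tmono 0 (smult (coeff Q n) (halfD ^ n))))"
    by (subst PQ, subst pcompose_as_sum) (rule Lam_tmono_sum[OF L pt])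
  also have "\<dots> = (\<Sum>n\<le>degree Q. coeff Q n * lam_coeff L n)"
    using \<open>odd_poly Q\<close>
    by (intro sum.cong refl) (auto simp: lam_coeff_def odd_poly_coeff_even L Lam_tmono_0
        Lam_tmono_smult Dplus_coeff_halfD_power)
  also have "\<dots> = lam_ext L P"
    by (simp add: lam_ext_def Q_def degree_pcompose_shift)
  finally show ?thesis .
qed

section \<open>Quasifiniteness from the shift condition\<close>

definition shift_prod :: "complex poly \<Rightarrow> nat \<Rightarrow> complex poly" where
  "shift_prod g d = (\<Prod>i<d. shiftp g (- int i))"

definition divisible_coeffs :: "complex poly \<Rightarrow> nat \<Rightarrow> complex poly set" where
  "divisible_coeffs g d = {f. Dplus_coeff (- int d) f \<and> shift_prod g d dvd f}"

definition coeff_reflect :: "nat \<Rightarrow> complex poly \<Rightarrow> complex poly" where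
  "coeff_reflect d f = pcompose f [:of_int (int d) - 1, -1:]"

lemma Dplus_coeff_iff_reflect: "Dplus_coeff (- int d) f \<longleftrightarrow> coeff_reflect d f = - f"
  by (simp add: Dplus_coeff_def coeff_reflect_def)

lemma coeff_reflect_coeff_reflect: "coeff_reflect d (coeff_reflect d f) = f"
  by (simp add: coeff_reflect_def pcompose_assoc[symmetric] pcompose_linear_linear)

lemma coeff_reflect_diff: "coeff_reflect d (f - g) = coeff_reflect d f - coeff_reflect d g"
  by (simp add: coeff_reflect_def pcompose_diff)

lemma coeff_reflect_smult: "coeff_reflect d (smult c f) = smult c (coeff_reflect d f)"
  by (simp add: coeff_reflect_def pcompose_smult)

lemma coeff_reflect_mult: "coeff_reflect d (f * g) = coeff_reflect d f * coeff_reflect d g"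
  by (simp add: coeff_reflect_def pcompose_mult)

lemma coeff_reflect_prod: "coeff_reflect d (prod F A) = (\<Prod>i\<in>A. coeff_reflect d (F i))"
  by (induction A rule: infinite_finite_induct)
    (simp_all add: coeff_reflect_def pcompose_mult pcompose_1)

lemma coeff_reflect_sum: "coeff_reflect d (sum F A) = (\<Sum>i\<in>A. coeff_reflect d (F i))"
  by (induction A rule: infinite_finite_induct) (simp_all add: coeff_reflect_def pcompose_add)

lemma shift_prod_nonzero: "g \<noteq> 0 \<Longrightarrow> shift_prod g d \<noteq> 0"
  by (auto simp: shift_prod_def shiftp_eq_0_iff)

lemma shift_prod_dvd_mono: "e \<le> d \<Longrightarrow> shift_prod g e dvd shift_prod g d"
  unfolding shift_prod_def by (rule prod_dvd_prod_subset) auto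

lemma shiftp_shift_prod: "shiftp (shift_prod g d) s = (\<Prod>i<d. shiftp g (s - int i))"
  by (simp add: shift_prod_def shiftp_prod shiftp_shiftp)

lemma shift_prod_dvd_shiftp: "e \<le> d \<Longrightarrow> shift_prod g (d - e) dvd shiftp (shift_prod g d) (int e)"
proof -
  assume e: "e \<le> d"
  have "shift_prod g (d - e) = (\<Prod>i<d - e. shiftp g (int e - int (i + e)))"
    by (simp add: shift_prod_def)
  also have "\<dots> = prod (\<lambda>i. shiftp g (int e - int i)) ((\<lambda>i. i + e) ` {..<d - e})"
    by (subst prod.reindex) (auto simp: inj_on_def)
  also have "\<dots> dvd (\<Prod>i<d. shiftp g (int e - int i))"
    by (rule prod_dvd_prod_subset) auto
  finally show ?thesis
    by (simp add: shiftp_shift_prod)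
qed

lemma dvd_shiftp_shift_prod: "s < d \<Longrightarrow> g dvd shiftp (shift_prod g d) (int s)"
proof -
  assume "s < d"
  then have "shiftp g (int s - int s) dvd (\<Prod>i<d. shiftp g (int s - int i))"
    by (intro dvd_prodI) auto
  then show ?thesis
    by (simp add: shiftp_shift_prod)
qed

lemma poly_shift_prod_eq_0:
  assumes "poly g 0 = 0" and "0 \<le> m" "m < int d"
  shows "poly (shift_prod g d) (of_int m) = 0"
  unfolding shift_prod_def poly_prod
  using assms by (intro prod_zero bexI[of _ "nat m"]) (simp_all add: shiftp_def poly_pcompose)

lemma coeff_reflect_shift_prod:
  assumes "odd_poly g"
  shows "coeff_reflect d (shift_prod g d) = smult ((-1) ^ d) (shift_prod g d)"
proof -
  have prod_neg: "(\<Prod>i<n. - F i) = smult ((-1) ^ n) (\<Prod>i<n. F i :: complex poly)" for n F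
    by (induction n) (simp_all add: mult_smult_left)
  have "coeff_reflect d (shiftp g (- int i)) = - shiftp g (- int (d - Suc i))" if "i < d" for i
  proof -
    have "coeff_reflect d (shiftp g (- int i))
        = pcompose (pcompose g [:0, -1:]) [:- (of_int (int d) - 1 - of_int (int i)), 1:]"
      by (simp add: coeff_reflect_def shiftp_def pcompose_assoc[symmetric] pcompose_linear_linear)
    then show ?thesis
      using that assms by (simp add: odd_poly_def shiftp_def pcompose_uminus of_nat_diff algebra_simps)
  qed
  then have "coeff_reflect d (shift_prod g d) = (\<Prod>i<d. - shiftp g (- int (d - Suc i)))"
    unfolding shift_prod_def coeff_reflect_prod by (intro prod.cong) simp_all
  also have "\<dots> = smult ((-1) ^ d) (\<Prod>i<d. shiftp g (- int (d - Suc i)))"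
    by (rule prod_neg)
  also have "(\<Prod>i<d. shiftp g (- int (d - Suc i))) = shift_prod g d"
    unfolding shift_prod_def by (rule prod.nat_diff_reindex)
  finally show ?thesis .
qed

lemma divisible_coeffs_bracket_lt:
  assumes e: "0 < e" "e < int d" "Dplus_coeff e u" and f: "f \<in> divisible_coeffs g d"
  shows "bracket_coeff e u (- int d) f \<in> divisible_coeffs g (d - nat e)"
proof -
  obtain q where q: "f = shift_prod g d * q"
    using f by (auto simp: divisible_coeffs_def elim!: dvdE)
  have "shift_prod g (d - nat e) dvd f"
    unfolding q using shift_prod_dvd_mono[of "d - nat e" d g] by (simp add: dvd_mult2)
  moreover have "shift_prod g (d - nat e) dvd shiftp f e"
    using shift_prod_dvd_shiftp[of "nat e" d g] e by (simp add: q shiftp_mult dvd_mult2)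
  ultimately have "shift_prod g (d - nat e) dvd bracket_coeff e u (- int d) f"
    by (simp add: bracket_coeff_def dvd_diff dvd_mult)
  moreover have "Dplus_coeff (- int (d - nat e)) (bracket_coeff e u (- int d) f)"
    using Dplus_coeff_bracket[OF e(3), of "- int d" f] f e(1,2)
    by (simp add: divisible_coeffs_def of_nat_diff)
  ultimately show ?thesis
    by (simp add: divisible_coeffs_def)
qed

lemma divisible_coeffs_bracket_0:
  assumes "Dplus_coeff 0 h" and "f \<in> divisible_coeffs g d"
  shows "bracket_coeff 0 h (- int d) f \<in> divisible_coeffs g d"
proof -
  have "bracket_coeff 0 h (- int d) f = (shiftp h (- int d) - h) * f"
    by (simp add: bracket_coeff_def left_diff_distrib)
  then show ?thesis
    using assms Dplus_coeff_bracket[OF assms(1), of "- int d" f]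
    by (auto simp: divisible_coeffs_def)
qed

text \<open>The central term vanishes because \<open>f\<close> vanishes at \<open>0, \<dots>, d - 1\<close>.\<close>
lemma psi_mono_divisible_coeffs:
  assumes "odd_poly g" and "f \<in> divisible_coeffs g d"
  shows "psi_mono (int d) u f = 0"
proof -
  obtain q where q: "f = shift_prod g d * q"
    using assms(2) by (auto simp: divisible_coeffs_def elim!: dvdE)
  have "poly f (of_int (j + int d)) = 0" if "j \<in> {- int d..-1}" for j
    using that poly_shift_prod_eq_0[OF poly_0_eq_0_if_odd[OF assms(1)], of "j + int d" d]
    by (simp add: q)
  then show ?thesis
    by (simp add: psi_mono_def)
qed

lemma lam_ext_bracket_divisible_coeffs:
  assumes c: "\<And>q. lam_ext L (g * q - shiftp (g * q) 1) = 0" and f: "f \<in> divisible_coeffs g d"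
  shows "lam_ext L (bracket_coeff (int d) u (- int d) f) = 0"
proof -
  define \<phi> where "\<phi> = shiftp u (- int d) * f"
  have "bracket_coeff (int d) u (- int d) f = \<phi> - shiftp \<phi> (int d)"
    by (simp add: bracket_coeff_def \<phi>_def shiftp_mult shiftp_shiftp)
  moreover have "lam_ext L (\<phi> - shiftp \<phi> (int d)) = 0"
  proof (rule lam_ext_shift_telescope[OF c])
    fix s assume "s < d"
    then have "g dvd shiftp f (int s)"
      using f dvd_shiftp_shift_prod[of s d g]
      by (auto simp: divisible_coeffs_def shiftp_mult dvd_mult2 elim!: dvdE)
    then show "g dvd shiftp \<phi> (int s)"
      by (simp add: \<phi>_def shiftp_mult dvd_mult)
  qed
  ultimately show ?thesis
    by simp
qed

definition reflect_basis :: "nat \<Rightarrow> nat \<Rightarrow> complex poly" where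
  "reflect_basis d n = smult (1/2) (monom 1 n - coeff_reflect d (monom 1 n))"

definition reflect_basis_set :: "complex poly \<Rightarrow> nat \<Rightarrow> complex poly set" where
  "reflect_basis_set g d = reflect_basis d ` {..<degree (shift_prod g d)}"

lemma Dplus_coeff_reflect_basis: "Dplus_coeff (- int d) (reflect_basis d n)"
  by (simp add: Dplus_coeff_iff_reflect reflect_basis_def coeff_reflect_smult coeff_reflect_diff
      coeff_reflect_coeff_reflect smult_diff_right)

lemma Dplus_coeff_reflect_basis_set: "e < 0 \<Longrightarrow> b \<in> reflect_basis_set g (nat (- e)) \<Longrightarrow> Dplus_coeff e b"
  using Dplus_coeff_reflect_basis[of "nat (- e)"] by (auto simp: reflect_basis_set_def)

lemma smult_sum_right: "smult c (sum F A) = (\<Sum>i\<in>A. smult c (F i))"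
  by (induction A rule: infinite_finite_induct) (simp_all add: smult_add_right)

lemma reflect_basis_sum:
  assumes "\<And>n. N \<le> n \<Longrightarrow> coeff r n = 0"
  shows "smult (1/2) (r - coeff_reflect d r) = (\<Sum>n<N. smult (coeff r n) (reflect_basis d n))"
proof -
  have "r = (\<Sum>n<N. smult (coeff r n) (monom 1 n))"
  proof (rule poly_eqI)
    fix k
    have "coeff (\<Sum>n<N. smult (coeff r n) (monom 1 n)) k = (\<Sum>n<N. if n = k then coeff r n else 0)"
      by (simp add: coeff_sum coeff_monom if_distrib cong: if_cong)
    then show "coeff r k = coeff (\<Sum>n<N. smult (coeff r n) (monom 1 n)) k"
      using assms[of k] by (cases "k < N") simp_all
  qed
  then have "smult (1/2) (r - coeff_reflect d r) = smult (1/2)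
      ((\<Sum>n<N. smult (coeff r n) (monom 1 n)) - coeff_reflect d (\<Sum>n<N. smult (coeff r n) (monom 1 n)))"
    by simp
  also have "\<dots> = (\<Sum>n<N. smult (coeff r n) (reflect_basis d n))"
    by (simp add: coeff_reflect_sum coeff_reflect_smult reflect_basis_def sum_subtractf
        smult_sum_right smult_diff_right)
  finally show ?thesis .
qed

lemma Dplus_coeff_decompose:
  assumes g: "odd_poly g" "g \<noteq> 0" and f: "Dplus_coeff (- int d) f"
  shows "\<exists>p r. p \<in> divisible_coeffs g d
    \<and> f = p + (\<Sum>n<degree (shift_prod g d). smult (coeff r n) (reflect_basis d n))"
proof -
  define B where "B = shift_prod g d"
  define r where "r = f mod B"
  define p where "p = f - smult (1/2) (r - coeff_reflect d r)"
  have B: "B \<noteq> 0"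
    using shift_prod_nonzero[OF g(2)] by (simp add: B_def)
  have "smult (1/2) (f - coeff_reflect d f) = smult (1/2 + 1/2) f"
    using f by (simp only: Dplus_coeff_iff_reflect diff_minus_eq_add smult_add_left smult_add_right)
  then have "p = smult (1/2) (f - coeff_reflect d f) - smult (1/2) (r - coeff_reflect d r)"
    by (simp add: p_def)
  also have "\<dots> = smult (1/2) ((f - r) - coeff_reflect d (f - r))"
    by (simp add: coeff_reflect_diff algebra_simps flip: smult_diff_right)
  also have "f - r = B * (f div B)"
    by (simp add: r_def minus_mod_eq_mult_div)
  finally have "p = B * smult (1/2) (f div B - smult ((-1) ^ d) (coeff_reflect d (f div B)))"
    by (simp add: B_def coeff_reflect_mult coeff_reflect_shift_prod[OF g(1)] mult_smult_right
        right_diff_distrib mult.commute)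
  then have "B dvd p"
    by (rule dvdI)
  moreover have "coeff_reflect d p = - p"
    using f by (simp add: p_def Dplus_coeff_iff_reflect coeff_reflect_diff coeff_reflect_smult
        coeff_reflect_coeff_reflect smult_diff_right)
  ultimately have "p \<in> divisible_coeffs g d"
    by (simp add: divisible_coeffs_def Dplus_coeff_iff_reflect B_def)
  moreover have "coeff r n = 0" if "degree B \<le> n" for n
    using degree_mod_less[OF B, of f] that by (cases "r = 0") (auto simp: r_def coeff_eq_0)
  ultimately show ?thesis
    using reflect_basis_sum[of "degree B" r d] unfolding p_def B_def
    by (intro exI[of _ "f - smult (1/2) (r - coeff_reflect d r)"] exI[of _ r]) simp
qed

definition basis_word :: "complex poly \<Rightarrow> (int \<times> complex poly) list \<Rightarrow> bool" where
  "basis_word g cs \<longleftrightarrow> (\<forall>(e, b)\<in>set cs. e < 0 \<and> b \<in> reflect_basis_set g (nat (- e)))"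

lemma basis_word_Cons [simp]:
  "basis_word g ((e, b) # cs) \<longleftrightarrow> e < 0 \<and> b \<in> reflect_basis_set g (nat (- e)) \<and> basis_word g cs"
  by (simp add: basis_word_def)

lemma basis_word_neg_word: "basis_word g cs \<Longrightarrow> neg_word cs"
  by (auto simp: basis_word_def neg_word_def Dplus_coeff_reflect_basis_set)

lemma basis_word_deg_le: "basis_word g cs \<Longrightarrow> (e, b) \<in> set cs \<Longrightarrow> word_deg cs \<le> e"
proof (induction cs)
  case (Cons x cs)
  obtain e' b' where x: "x = (e', b')"
    by (cases x)
  have "word_deg cs \<le> 0"
    using neg_word_deg_le[OF basis_word_neg_word, of g cs] Cons.prems(1) by (simp add: x)
  then show ?case
    using Cons by (auto simp: x)
qed simp

context hw_irrep
begin

lemma pi_pos_tmono_divisible_coeffs: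
  assumes g: "odd_poly g" and c: "\<And>q. lam_ext \<Lambda> (g * q - shiftp (g * q) 1) = 0"
    and IH: "\<And>d' f'. 1 \<le> d' \<Longrightarrow> d' < d \<Longrightarrow> f' \<in> divisible_coeffs g d'
      \<Longrightarrow> \<pi> (tmono (- int d') f') v = 0"
    and e: "0 < e" "Dplus_coeff e u" and f: "f \<in> divisible_coeffs g d"
  shows "\<pi> (tmono e u) (\<pi> (tmono (- int d) f) v) = 0"
proof -
  have df: "Dplus_coeff (- int d) f"
    using f by (simp add: divisible_coeffs_def)
  define P where "P = bracket_coeff e u (- int d) f"
  have P: "Dplus_coeff (e + - int d) P"
    unfolding P_def by (rule Dplus_coeff_bracket[OF e(2) df])
  have "\<pi> (tmono e u) (\<pi> (tmono (- int d) f) v)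
      = \<pi> (tmono (e + - int d) P) v + \<pi> (central (if e + - int d = 0 then psi_mono e u f else 0)) v"
    using pi_tmono_commute[OF e(2) df, of v] v_pos_annihilated[OF e] pi_0[OF tmono_DhatPlus[OF df]]
    by (simp add: P_def)
  moreover consider "e < int d" | "e = int d" | "int d < e"
    by linarith
  then have "\<pi> (tmono (e + - int d) P) v = 0 \<and> (e + - int d = 0 \<longrightarrow> psi_mono e u f = 0)"
  proof cases
    case 1
    then have "P \<in> divisible_coeffs g (d - nat e)"
      unfolding P_def using divisible_coeffs_bracket_lt e f by blast
    then show ?thesis
      using IH[of "d - nat e"] e(1) 1 by (simp add: of_nat_diff)
  next
    case 2
    then have "\<Lambda> (tmono 0 P) = 0"
      using Lam_tmono_eq_lam_ext[OF lin] P lam_ext_bracket_divisible_coeffs[OF c f]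
      by (simp add: P_def)
    then show ?thesis
      using 2 P v_weight psi_mono_divisible_coeffs[OF g f] by simp
  next
    case 3
    then show ?thesis
      using v_pos_annihilated[OF _ P] by simp
  qed
  ultimately show ?thesis
    by (auto simp: pi_central_0)
qed

definition divisible_vectors :: "complex poly \<Rightarrow> nat \<Rightarrow> 'v set" where
  "divisible_vectors g d = {\<pi> (tmono (- int d) f) v | f. f \<in> divisible_coeffs g d}"

lemma divisible_vectors_iff:
  "x \<in> divisible_vectors g d \<longleftrightarrow> (\<exists>f. x = \<pi> (tmono (- int d) f) v \<and> f \<in> divisible_coeffs g d)"
  by (simp add: divisible_vectors_def)

lemma divisible_vectors_grade: "divisible_vectors g d \<subseteq> V (- int d)"
proof
  fix x assume "x \<in> divisible_vectors g d"
  then obtain f where "x = \<pi> (tmono (- int d) f) v" "Dplus_coeff (- int d) f"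
    by (auto simp: divisible_vectors_iff divisible_coeffs_def)
  then show "x \<in> V (- int d)"
    using pi_tmono_grade[OF _ v_grade_0] by simp
qed

lemma pi_tmono_0_divisible_vectors:
  assumes h: "Dplus_coeff 0 h" and d: "1 \<le> d" and t: "t \<in> span (divisible_vectors g d)"
  shows "\<pi> (tmono 0 h) t \<in> span (divisible_vectors g d)"
proof (rule pi_span[OF tmono_DhatPlus[OF h] _ t])
  fix x assume x: "x \<in> divisible_vectors g d"
  then obtain f where x_def: "x = \<pi> (tmono (- int d) f) v" and f: "f \<in> divisible_coeffs g d"
    by (auto simp: divisible_vectors_iff)
  then have df: "Dplus_coeff (- int d) f"
    by (simp add: divisible_coeffs_def)
  have "\<pi> (tmono 0 h) x
      = \<pi> (tmono (- int d) (bracket_coeff 0 h (- int d) f)) v + sc (\<Lambda> (tmono 0 h)) x"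
    using pi_tmono_commute[OF h df, of v] d
    by (simp add: x_def pi_central_0 v_weight[OF h] pi_scale tmono_DhatPlus[OF df])
  moreover have "\<pi> (tmono (- int d) (bracket_coeff 0 h (- int d) f)) v \<in> divisible_vectors g d"
    unfolding divisible_vectors_iff using divisible_coeffs_bracket_0[OF h f] by blast
  ultimately show "\<pi> (tmono 0 h) x \<in> span (divisible_vectors g d)"
    using x by (simp add: span_add span_scale span_base)
qed

lemma pi_central_divisible_vectors:
  assumes t: "t \<in> span (divisible_vectors g d)"
  shows "\<pi> (central c) t \<in> span (divisible_vectors g d)"
proof (rule pi_span[OF central_DhatPlus _ t])
  fix x assume x: "x \<in> divisible_vectors g d"
  then obtain f where "x = \<pi> (tmono (- int d) f) v" "Dplus_coeff (- int d) f"
    by (auto simp: divisible_vectors_iff divisible_coeffs_def)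
  then have "\<pi> (central c) x = sc (\<Lambda> (central c)) x"
    by (simp add: pi_central_commute tmono_DhatPlus v_central pi_scale)
  then show "\<pi> (central c) x \<in> span (divisible_vectors g d)"
    using x by (simp add: span_scale span_base)
qed

text \<open>By induction on \<open>d\<close>: the span of \<open>divisible_vectors g d\<close> is killed by the positive
  part (by the induction hypothesis), so it consists of singular vectors.\<close>
lemma divisible_coeffs_annihilate_v:
  assumes g: "odd_poly g" and c: "\<And>q. lam_ext \<Lambda> (g * q - shiftp (g * q) 1) = 0"
  shows "1 \<le> d \<Longrightarrow> f \<in> divisible_coeffs g d \<Longrightarrow> \<pi> (tmono (- int d) f) v = 0"
proof (induction d arbitrary: f rule: less_induct)
  case (less d)
  have P: "\<pi> (tmono e u) t = 0"
    if e: "0 < e" "Dplus_coeff e u" and t: "t \<in> span (divisible_vectors g d)" for e u t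
  proof -
    have "\<pi> (tmono e u) t \<in> span {}"
    proof (rule pi_span[OF tmono_DhatPlus[OF e(2)] _ t])
      fix x assume "x \<in> divisible_vectors g d"
      then obtain f where "x = \<pi> (tmono (- int d) f) v" "f \<in> divisible_coeffs g d"
        by (auto simp: divisible_vectors_iff)
      then show "\<pi> (tmono e u) x \<in> span {}"
        using pi_pos_tmono_divisible_coeffs[OF g c less.IH e] by (simp add: span_zero)
    qed
    then show ?thesis
      by simp
  qed
  have "\<pi> (tmono (- int d) f) v \<in> span (divisible_vectors g d)"
    unfolding divisible_vectors_def using less.prems(2) by (intro span_base CollectI exI[of _ f]) simp
  moreover have "0 < int d"
    using less.prems(1) by simp
  ultimately show ?case
    using singular_subspace_eq_0[OF subspace_span span_minimal[OF divisible_vectors_grade subspace_grade]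
        _ P pi_tmono_0_divisible_vectors[OF _ less.prems(1)] pi_central_divisible_vectors]
    by blast
qed

definition basis_word_vectors :: "complex poly \<Rightarrow> nat \<Rightarrow> int \<Rightarrow> 'v set" where
  "basis_word_vectors g n j = {word_act cs v | cs. basis_word g cs \<and> length cs \<le> n \<and> word_deg cs = j}"

lemma v_basis_word_vectors: "v \<in> basis_word_vectors g n 0"
  unfolding basis_word_vectors_def by (intro CollectI exI[of _ "[]"]) (simp add: basis_word_def)

lemma span_basis_word_vectors_Suc:
  assumes "u \<in> span (basis_word_vectors g n j)"
  shows "u \<in> span (basis_word_vectors g (Suc n) j)"
proof -
  have "basis_word_vectors g n j \<subseteq> basis_word_vectors g (Suc n) j"
    by (auto simp: basis_word_vectors_def)
  from subsetD[OF span_mono[OF this] assms] show ?thesis .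
qed

lemma pi_reflect_basis_span:
  assumes e: "e < 0" "b \<in> reflect_basis_set g (nat (- e))" and u: "u \<in> span (basis_word_vectors g n k)"
  shows "\<pi> (tmono e b) u \<in> span (basis_word_vectors g (Suc n) (e + k))"
proof (rule pi_span[OF tmono_DhatPlus[OF Dplus_coeff_reflect_basis_set[OF e]] _ u])
  fix x assume "x \<in> basis_word_vectors g n k"
  then obtain cs where cs: "x = word_act cs v" "basis_word g cs" "length cs \<le> n" "word_deg cs = k"
    by (auto simp: basis_word_vectors_def)
  then have "\<pi> (tmono e b) x \<in> basis_word_vectors g (Suc n) (e + k)"
    using e unfolding basis_word_vectors_def by (intro CollectI exI[of _ "(e, b) # cs"]) simp
  then show "\<pi> (tmono e b) x \<in> span (basis_word_vectors g (Suc n) (e + k))"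
    by (rule span_base)
qed

lemma pi_divisible_span_basis_words:
  assumes div: "\<And>f cs. f \<in> divisible_coeffs g (nat (- e)) \<Longrightarrow> basis_word g cs
      \<Longrightarrow> length cs \<le> n \<Longrightarrow> \<pi> (tmono e f) (word_act cs v) \<in> span (basis_word_vectors g n (e + word_deg cs))"
    and e: "Dplus_coeff e p" "p \<in> divisible_coeffs g (nat (- e))"
    and w: "w \<in> span (basis_word_vectors g n k)"
  shows "\<pi> (tmono e p) w \<in> span (basis_word_vectors g n (e + k))"
proof (rule pi_span[OF tmono_DhatPlus[OF e(1)] _ w])
  fix y assume "y \<in> basis_word_vectors g n k"
  then obtain cs where cs: "y = word_act cs v" "basis_word g cs" "length cs \<le> n" "word_deg cs = k"
    by (auto simp: basis_word_vectors_def)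
  then show "\<pi> (tmono e p) y \<in> span (basis_word_vectors g n (e + k))"
    using div[OF e(2) cs(2,3)] by simp
qed

lemma word_in_span_basis_words_step:
  assumes g: "odd_poly g" "g \<noteq> 0"
    and words: "\<And>ws. neg_word ws \<Longrightarrow> length ws \<le> n
      \<Longrightarrow> word_act ws v \<in> span (basis_word_vectors g n (word_deg ws))"
    and div: "\<And>e f cs. e < 0 \<Longrightarrow> f \<in> divisible_coeffs g (nat (- e)) \<Longrightarrow> basis_word g cs
      \<Longrightarrow> length cs \<le> n \<Longrightarrow> \<pi> (tmono e f) (word_act cs v) \<in> span (basis_word_vectors g n (e + word_deg cs))"
    and ws: "neg_word ws" "length ws \<le> Suc n"
  shows "word_act ws v \<in> span (basis_word_vectors g (Suc n) (word_deg ws))"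
proof (cases ws)
  case Nil
  then show ?thesis
    using v_basis_word_vectors by (simp add: span_base)
next
  case (Cons x ws')
  obtain e f where x: "x = (e, f)"
    by (cases x)
  have e: "e < 0" "Dplus_coeff e f" and ws': "neg_word ws'" "length ws' \<le> n"
    using ws by (auto simp: Cons x)
  define d where "d = nat (- e)"
  then have ed: "e = - int d"
    using e by simp
  have "Dplus_coeff (- int d) f"
    using e(2) ed by simp
  from Dplus_coeff_decompose[OF g this] obtain p r where p: "p \<in> divisible_coeffs g d"
    and f: "f = p + (\<Sum>m<degree (shift_prod g d). smult (coeff r m) (reflect_basis d m))"
    by (elim exE conjE)
  define w where "w = word_act ws' v"
  have w: "w \<in> span (basis_word_vectors g n (word_deg ws'))"
    using words[OF ws'] by (simp add: w_def)
  have dp: "Dplus_coeff e p"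
    using p by (simp add: divisible_coeffs_def ed)
  have db: "Dplus_coeff e (reflect_basis d m)" for m
    using Dplus_coeff_reflect_basis[of d m] by (simp add: ed)
  have "\<pi> (tmono e (\<Sum>m<degree (shift_prod g d). smult (coeff r m) (reflect_basis d m))) w
      = (\<Sum>m<degree (shift_prod g d). sc (coeff r m) (\<pi> (tmono e (reflect_basis d m)) w))"
    by (simp add: pi_tmono_sum pi_tmono_smult Dplus_coeff_smult db)
  then have "\<pi> (tmono e f) w = \<pi> (tmono e p) w
      + (\<Sum>m<degree (shift_prod g d). sc (coeff r m) (\<pi> (tmono e (reflect_basis d m)) w))"
    unfolding f by (simp add: pi_tmono_add dp Dplus_coeff_sum Dplus_coeff_smult db)
  also have "\<dots> \<in> span (basis_word_vectors g (Suc n) (e + word_deg ws'))"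
  proof (intro span_add span_sum span_scale)
    show "\<pi> (tmono e p) w \<in> span (basis_word_vectors g (Suc n) (e + word_deg ws'))"
      using p div[OF e(1)] unfolding d_def
      by (intro span_basis_word_vectors_Suc pi_divisible_span_basis_words[OF _ dp _ w])
  next
    fix m assume "m \<in> {..<degree (shift_prod g d)}"
    then have "reflect_basis d m \<in> reflect_basis_set g (nat (- e))"
      by (simp add: reflect_basis_set_def d_def)
    then show "\<pi> (tmono e (reflect_basis d m)) w \<in> span (basis_word_vectors g (Suc n) (e + word_deg ws'))"
      by (rule pi_reflect_basis_span[OF e(1) _ w])
  qed
  finally show ?thesis
    by (simp add: Cons x w_def)
qed

lemma divisible_on_basis_word_step:
  assumes g: "odd_poly g" and c: "\<And>q. lam_ext \<Lambda> (g * q - shiftp (g * q) 1) = 0"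
    and words: "\<And>ws. neg_word ws \<Longrightarrow> length ws \<le> Suc n
      \<Longrightarrow> word_act ws v \<in> span (basis_word_vectors g (Suc n) (word_deg ws))"
    and div: "\<And>e f cs. e < 0 \<Longrightarrow> f \<in> divisible_coeffs g (nat (- e)) \<Longrightarrow> basis_word g cs
      \<Longrightarrow> length cs \<le> n \<Longrightarrow> \<pi> (tmono e f) (word_act cs v) \<in> span (basis_word_vectors g n (e + word_deg cs))"
    and h: "e < 0" "f \<in> divisible_coeffs g (nat (- e))" "basis_word g cs" "length cs \<le> Suc n"
  shows "\<pi> (tmono e f) (word_act cs v) \<in> span (basis_word_vectors g (Suc n) (e + word_deg cs))"
proof (cases cs)
  case Nil
  have "\<pi> (tmono (- int (nat (- e))) f) v = 0"
    by (rule divisible_coeffs_annihilate_v[OF g c]) (use h in auto)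
  then show ?thesis
    using h Nil by (simp add: span_zero)
next
  case (Cons y cs')
  obtain e' b where y: "y = (e', b)"
    by (cases y)
  have b: "e' < 0" "b \<in> reflect_basis_set g (nat (- e'))" "basis_word g cs'" "length cs' \<le> n"
    using h by (auto simp: Cons y)
  have df: "Dplus_coeff e f" and db: "Dplus_coeff e' b"
    using h(1,2) Dplus_coeff_reflect_basis_set[OF b(1,2)] by (simp_all add: divisible_coeffs_def)
  define w where "w = word_act cs' v"
  have deg: "e + word_deg cs = e + e' + word_deg cs'" "e + word_deg cs = e' + (e + word_deg cs')"
    by (simp_all add: Cons y)
  have "\<pi> (tmono e f) (\<pi> (tmono e' b) w)
      = \<pi> (tmono (e + e') (bracket_coeff e f e' b)) w + \<pi> (tmono e' b) (\<pi> (tmono e f) w)"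
    using h(1) b(1) by (intro pi_tmono_commute_ne[OF df db]) simp
  moreover have "neg_word ((e + e', bracket_coeff e f e' b) # cs')"
    using h(1) b(1) Dplus_coeff_bracket[OF df db] basis_word_neg_word[OF b(3)] by simp
  then have "\<pi> (tmono (e + e') (bracket_coeff e f e' b)) w
      \<in> span (basis_word_vectors g (Suc n) (e + word_deg cs))"
    unfolding deg(1) using words[of "(e + e', bracket_coeff e f e' b) # cs'"] b(4)
    by (simp add: w_def)
  moreover have "\<pi> (tmono e f) w \<in> span (basis_word_vectors g n (e + word_deg cs'))"
    using div[OF h(1,2) b(3,4)] by (simp add: w_def)
  then have "\<pi> (tmono e' b) (\<pi> (tmono e f) w) \<in> span (basis_word_vectors g (Suc n) (e + word_deg cs))"
    unfolding deg(2) by (rule pi_reflect_basis_span[OF b(1,2)])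
  ultimately show ?thesis
    by (simp add: Cons y w_def span_add)
qed

text \<open>Proved together with the corresponding statement for \<open>t\<^sup>e f(D)\<close>, \<open>f\<close> divisible, applied
  to basis words, by simultaneous induction on the length bound \<open>n\<close>.\<close>
lemma neg_word_in_span_basis_words:
  assumes g: "odd_poly g" "g \<noteq> 0" and c: "\<And>q. lam_ext \<Lambda> (g * q - shiftp (g * q) 1) = 0"
    and ws: "neg_word ws" "length ws \<le> n"
  shows "word_act ws v \<in> span (basis_word_vectors g n (word_deg ws))"
proof -
  have "(\<forall>ws. neg_word ws \<longrightarrow> length ws \<le> n \<longrightarrow>
           word_act ws v \<in> span (basis_word_vectors g n (word_deg ws))) \<and>
        (\<forall>e f cs. e < 0 \<longrightarrow> f \<in> divisible_coeffs g (nat (- e)) \<longrightarrow> basis_word g cs \<longrightarrow>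
           length cs \<le> n \<longrightarrow> \<pi> (tmono e f) (word_act cs v) \<in> span (basis_word_vectors g n (e + word_deg cs)))"
  proof (induction n)
    case 0
    show ?case
    proof (intro conjI allI impI)
      fix ws :: "(int \<times> complex poly) list" assume "neg_word ws" "length ws \<le> 0"
      then show "word_act ws v \<in> span (basis_word_vectors g 0 (word_deg ws))"
        using v_basis_word_vectors by (simp add: span_base)
    next
      fix e f and cs :: "(int \<times> complex poly) list"
      assume "e < 0" "f \<in> divisible_coeffs g (nat (- e))" "basis_word g cs" "length cs \<le> 0"
      then show "\<pi> (tmono e f) (word_act cs v) \<in> span (basis_word_vectors g 0 (e + word_deg cs))"
        using divisible_coeffs_annihilate_v[OF g(1) c, of "nat (- e)" f] by (simp add: span_zero)
    qed
  next
    case (Suc n)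
    have words: "word_act ws v \<in> span (basis_word_vectors g n (word_deg ws))"
      if "neg_word ws" "length ws \<le> n" for ws
      using Suc.IH that by simp
    have div: "\<pi> (tmono e f) (word_act cs v) \<in> span (basis_word_vectors g n (e + word_deg cs))"
      if "e < 0" "f \<in> divisible_coeffs g (nat (- e))" "basis_word g cs" "length cs \<le> n" for e f cs
      using Suc.IH that by simp
    have words': "word_act ws v \<in> span (basis_word_vectors g (Suc n) (word_deg ws))"
      if "neg_word ws" "length ws \<le> Suc n" for ws
      by (rule word_in_span_basis_words_step[OF g words div that])
    show ?case
    proof (intro conjI allI impI)
      fix ws :: "(int \<times> complex poly) list" assume "neg_word ws" "length ws \<le> Suc n"
      then show "word_act ws v \<in> span (basis_word_vectors g (Suc n) (word_deg ws))"
        by (rule words')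
    next
      fix e f and cs :: "(int \<times> complex poly) list"
      assume h: "e < 0" "f \<in> divisible_coeffs g (nat (- e))" "basis_word g cs" "length cs \<le> Suc n"
      show "\<pi> (tmono e f) (word_act cs v) \<in> span (basis_word_vectors g (Suc n) (e + word_deg cs))"
        using g(1) c words' div h by (rule divisible_on_basis_word_step)
    qed
  qed
  then show ?thesis
    using ws by simp
qed

lemma finite_basis_word_vectors: "finite (basis_word_vectors g n j)"
proof -
  define A where "A = Sigma {j..-1} (\<lambda>e. reflect_basis_set g (nat (- e)))"
  have "basis_word_vectors g n j \<subseteq> (\<lambda>cs. word_act cs v) ` {cs. set cs \<subseteq> A \<and> length cs \<le> n}"
  proof
    fix x assume "x \<in> basis_word_vectors g n j"
    then obtain cs where cs: "x = word_act cs v" "basis_word g cs" "length cs \<le> n" "word_deg cs = j"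
      by (auto simp: basis_word_vectors_def)
    have "set cs \<subseteq> A"
      using cs(2,4) basis_word_deg_le[OF cs(2)] by (auto simp: A_def basis_word_def)
    then show "x \<in> (\<lambda>cs. word_act cs v) ` {cs. set cs \<subseteq> A \<and> length cs \<le> n}"
      using cs by blast
  qed
  moreover have "finite A"
    by (simp add: A_def reflect_basis_set_def)
  then have "finite {cs. set cs \<subseteq> A \<and> length cs \<le> n}"
    by (rule finite_lists_length_le)
  ultimately show ?thesis
    by (rule finite_subset[OF _ finite_imageI])
qed

lemma basis_word_vectors_grade: "basis_word_vectors g n j \<subseteq> V j"
  using word_act_grade[OF neg_word_Dplus_word[OF basis_word_neg_word] v_grade_0]
  by (auto simp: basis_word_vectors_def)

lemma quasifinite_if_shift_condition:
  assumes g: "odd_poly g" "g \<noteq> 0" and c: "\<And>q. lam_ext \<Lambda> (g * q - shiftp (g * q) 1) = 0"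
  shows "quasifinite sc \<pi> \<Lambda>"
  unfolding quasifinite_def
proof
  fix j :: int
  define B where "B = basis_word_vectors g (nat (- j)) j"
  have "neg_word_vectors j \<subseteq> span B"
  proof
    fix x assume "x \<in> neg_word_vectors j"
    then obtain ws where ws: "x = word_act ws v" "neg_word ws" "word_deg ws = j"
      by (auto simp: neg_word_vectors_def)
    moreover have "length ws \<le> nat (- j)"
      using neg_word_deg_le[OF ws(2)] ws(3) by simp
    then have "word_act ws v \<in> span (basis_word_vectors g (nat (- j)) (word_deg ws))"
      by (rule neg_word_in_span_basis_words[OF g c ws(2)])
    then show "x \<in> span B"
      using ws by (simp add: B_def)
  qed
  then have "span (neg_word_vectors j) \<subseteq> span B"
    by (rule span_minimal) simp
  then have "V j \<subseteq> span B"
    using grade_in_span_neg_word_vectors by (auto simp del: span_minimal)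
  moreover have "finite B"
    unfolding B_def by (rule finite_basis_word_vectors)
  moreover have "B \<subseteq> V j"
    unfolding B_def by (rule basis_word_vectors_grade)
  ultimately show "\<exists>B. finite B \<and> B \<subseteq> V j \<and> V j \<subseteq> span B"
    by (intro exI[of _ B] conjI)
qed

end

section \<open>The shift condition from quasifiniteness\<close>

lemma (in vector_space) exists_nontrivial_relation:
  assumes B: "finite B" and w: "\<And>m. w m \<in> span B"
  shows "\<exists>c. (\<exists>m\<le>card B. c m \<noteq> 0) \<and> (\<Sum>m\<le>card B. scale (c m) (w m)) = 0"
proof (cases "inj_on w {..card B}")
  case False
  then obtain m1 m2 where m: "m1 \<le> card B" "m2 \<le> card B" "m1 \<noteq> m2" "w m1 = w m2"
    by (auto simp: inj_on_def)
  define c :: "nat \<Rightarrow> 'a" where "c m = (if m = m1 then 1 else if m = m2 then -1 else 0)" for m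
  have "(\<Sum>m\<le>card B. scale (c m) (w m)) = (\<Sum>m\<in>{m1, m2}. scale (c m) (w m))"
    using m by (intro sum.mono_neutral_right) (auto simp: c_def)
  also have "\<dots> = 0"
    using m by (simp add: c_def)
  finally show ?thesis
    using m by (intro exI[of _ c]) (auto simp: c_def)
next
  case True
  have "card (w ` {..card B}) = Suc (card B)"
    using True by (simp add: card_image)
  moreover have "w ` {..card B} \<subseteq> span B"
    using w by auto
  ultimately have "dependent (w ` {..card B})"
    using independent_span_bound[OF B] by fastforce
  then obtain u where u: "\<exists>x\<in>w ` {..card B}. u x \<noteq> 0" "(\<Sum>x\<in>w ` {..card B}. scale (u x) x) = 0"
    by (auto simp: dependent_finite)
  moreover have "(\<Sum>x\<in>w ` {..card B}. scale (u x) x) = (\<Sum>m\<le>card B. scale (u (w m)) (w m))"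
    using True by (simp add: sum.reindex)
  ultimately show ?thesis
    by (intro exI[of _ "u \<circ> w"]) auto
qed

lemma odd_poly_monom:
  assumes "odd n"
  shows "odd_poly (monom c n)"
  unfolding odd_poly_def
  by (rule poly_eqI) (use assms in \<open>auto simp: coeff_pcompose_linear coeff_monom\<close>)

lemma DeltaFps_compose_neg_X: "DeltaFps L oo - fps_X = - DeltaFps L"
  by (rule fps_ext) (simp add: DeltaFps_def)

context hw_irrep
begin

text \<open>\<open>V\<^sub>-\<^sub>1\<close> contains the vectors \<open>t\<^sup>-\<^sup>1 D\<^sup>2\<^sup>m\<^sup>+\<^sup>1 v\<close>; if it is finite-dimensional, some nontrivial
  combination of them vanishes.\<close>
lemma kernel_neg1_if_quasifinite:
  assumes "quasifinite sc \<pi> \<Lambda>"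
  shows "\<exists>g. g \<noteq> 0 \<and> odd_poly g \<and> \<pi> (tmono (-1) g) v = 0"
proof -
  obtain B where B: "finite B" "V (-1) \<subseteq> span B"
    using assms unfolding quasifinite_def by blast
  define w where "w m = \<pi> (tmono (-1) (monom 1 (2 * m + 1))) v" for m
  have odd: "Dplus_coeff (-1) (monom 1 (2 * m + 1))" for m
    by (simp add: Dplus_coeff_neg1_iff odd_poly_monom)
  have w: "w m \<in> span B" for m
    using pi_tmono_grade[OF odd v_grade_0] B(2) by (auto simp: w_def)
  from exists_nontrivial_relation[of B w, OF B(1) w]
  obtain c where c: "\<exists>m\<le>card B. c m \<noteq> 0" "(\<Sum>m\<le>card B. sc (c m) (w m)) = 0"
    by blast
  define g where "g = (\<Sum>m\<le>card B. smult (c m) (monom 1 (2 * m + 1)))"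
  have "coeff g (2 * k + 1) = c k" if "k \<le> card B" for k
    using that by (simp add: g_def coeff_sum coeff_monom if_distrib cong: if_cong)
  then have "g \<noteq> 0"
    using c(1) by auto
  moreover have "odd_poly g"
    using odd by (simp add: g_def Dplus_coeff_sum Dplus_coeff_smult flip: Dplus_coeff_neg1_iff)
  moreover have "\<pi> (tmono (-1) g) v = (\<Sum>m\<le>card B. sc (c m) (w m))"
    unfolding g_def w_def using odd by (simp add: pi_tmono_sum pi_tmono_smult Dplus_coeff_smult)
  ultimately show ?thesis
    using c(2) by (intro exI[of _ g]) simp
qed

text \<open>Bracket the singular vector \<open>t\<^sup>-\<^sup>1 g(D) v\<close> with \<open>t (D + 1)\<^sup>n\<close>.\<close>
lemma lam_ext_mult_monom_eq_0_if_kernel: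
  assumes g: "odd_poly g" and gv: "\<pi> (tmono (-1) g) v = 0" and n: "odd n"
  shows "lam_ext \<Lambda> (g * monom 1 n) = 0"
proof -
  define u where "u = shiftp (monom 1 n) 1"
  have dg: "Dplus_coeff (-1) g"
    using g by (simp add: Dplus_coeff_neg1_iff)
  have "pcompose u [:- of_int 1 - 1, -1:] = pcompose (pcompose (monom 1 n) [:0, -1:]) [:1, 1:]"
    by (simp add: u_def shiftp_def pcompose_assoc[symmetric] pcompose_linear_linear)
  then have du: "Dplus_coeff 1 u"
    using odd_poly_monom[OF n, of 1] by (simp add: Dplus_coeff_def odd_poly_def u_def shiftp_def
        pcompose_uminus)
  define P where "P = bracket_coeff 1 u (-1) g"
  have dP: "Dplus_coeff 0 P"
    using Dplus_coeff_bracket[OF du dg] by (simp add: P_def)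
  have "psi_mono 1 u g = 0"
    using poly_0_eq_0_if_odd[OF g] by (simp add: psi_mono_def)
  then have "\<pi> (tmono 0 P) v = 0"
    using pi_tmono_commute[OF du dg, of v] gv v_pos_annihilated[OF _ du]
    by (simp add: P_def pi_central_0 pi_0 tmono_DhatPlus[OF du] tmono_DhatPlus[OF dg])
  then have "lam_ext \<Lambda> P = 0"
    using v_weight[OF dP] v_nonzero Lam_tmono_eq_lam_ext[OF lin dP] by simp
  moreover have "P = g * monom 1 n - shiftp (g * monom 1 n) 1"
    by (simp add: P_def u_def bracket_coeff_def shiftp_shiftp shiftp_mult mult.commute)
  moreover have "pcompose (g * monom 1 n) [:0, -1:] = g * monom 1 n"
    using g odd_poly_monom[OF n, of 1] by (simp add: odd_poly_def pcompose_mult)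
  ultimately show ?thesis
    by (simp add: lam_ext_diff lam_ext_shiftp_1)
qed

lemma quasi_fun_if_quasifinite:
  assumes "quasifinite sc \<pi> \<Lambda>"
  shows "\<exists>F. is_quasipoly F \<and> (\<forall>x. F (- x) = F x) \<and> F 0 = 0 \<and>
           taylor_fps F = (fps_exp (1/2) - fps_exp (-1/2)) * DeltaFps \<Lambda>"
proof -
  obtain g where g: "g \<noteq> 0" "odd_poly g" "\<pi> (tmono (-1) g) v = 0"
    using kernel_neg1_if_quasifinite[OF assms] by blast
  have "fps_diffop g (fps_exp (-1/2) * DeltaFps \<Lambda>) $ n = 0" if "odd n" for n
    using lam_ext_mult_monom_eq_0_if_kernel[OF g(2,3) that] by (simp add: lam_ext_mult_monom)
  then show ?thesis
    by (intro quasi_fun_if_diffop_condition[OF DeltaFps_compose_neg_X g(1,2)]) simp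
qed

lemma quasifinite_if_quasi_fun:
  assumes "is_quasipoly F" and "taylor_fps F = (fps_exp (1/2) - fps_exp (-1/2)) * DeltaFps \<Lambda>"
  shows "quasifinite sc \<pi> \<Lambda>"
proof -
  obtain g where g: "g \<noteq> 0" "odd_poly g"
    and c: "\<forall>n. odd n \<longrightarrow> fps_diffop g (fps_exp (-1/2) * DeltaFps \<Lambda>) $ n = 0"
    using diffop_condition_if_quasi_fun[OF DeltaFps_compose_neg_X assms] by (elim exE conjE)
  have "lam_ext \<Lambda> (g * monom 1 n) = 0" if "odd n" for n
    using c that by (simp add: lam_ext_mult_monom)
  then show ?thesis
    by (intro quasifinite_if_shift_condition[OF g(2,1)] lam_ext_shift_condition[OF g(2)])
qed

end

theorem mainTheorem4:
  fixes sc :: "complex \<Rightarrow> 'v::ab_group_add \<Rightarrow> 'v"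
    and \<pi> :: "dhat \<Rightarrow> 'v \<Rightarrow> 'v"
    and \<Lambda> :: "dhat \<Rightarrow> complex"
    and v :: 'v
  assumes "linear_on_zero \<Lambda>"
    and "is_rep sc \<pi>"
    and "hw_vector sc \<pi> \<Lambda> v"
    and "irreducible_rep sc \<pi>"
  shows "quasifinite sc \<pi> \<Lambda> \<longleftrightarrow>
    (\<exists>F. is_quasipoly F \<and> (\<forall>x. F (- x) = F x) \<and> F 0 = 0 \<and>
         taylor_fps F = (fps_exp (1/2) - fps_exp (-1/2)) * DeltaFps \<Lambda>)"
proof -
  interpret hw_irrep sc \<pi> \<Lambda> v
    using assms by unfold_locales
  show ?thesis
  proof
    assume "quasifinite sc \<pi> \<Lambda>"
    then show "\<exists>F. is_quasipoly F \<and> (\<forall>x. F (- x) = F x) \<and> F 0 = 0 \<and>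
        taylor_fps F = (fps_exp (1/2) - fps_exp (-1/2)) * DeltaFps \<Lambda>"
      by (rule quasi_fun_if_quasifinite)
  next
    assume "\<exists>F. is_quasipoly F \<and> (\<forall>x. F (- x) = F x) \<and> F 0 = 0 \<and>
        taylor_fps F = (fps_exp (1/2) - fps_exp (-1/2)) * DeltaFps \<Lambda>"
    then obtain F where "is_quasipoly F" "taylor_fps F = (fps_exp (1/2) - fps_exp (-1/2)) * DeltaFps \<Lambda>"
      by blast
    then show "quasifinite sc \<pi> \<Lambda>"
      by (rule quasifinite_if_quasi_fun)
  qed
qed

end
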